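(* Let $\lambda,\mu\in\Lambda$, $g\in\mathcal{D}_{\lambda\mu}$ and $A=\kappa(\lambda,g,\mu)$. Then $W_{\delta(A)}=g^{-1}W_\lambda g\cap W_\mu$.
   Context: Fix integers $r\ge 0$, $d\ge 2$, $n=2r+2$, $D=2d+2$. $W$ is the group of bijections $g:\mathbb{Z}\to\mathbb{Z}$ with $g(i+D)=g(i)+D$, $g(-i)=-g(i)$; it is a Coxeter group with simple reflections $s_0,\dots,s_d$ where (elements determined by values on $1,\dots,d$) $s_0(1)=-1$, $s_0(k)=k$ ($k\ge2$); $s_d(d)=d+2$, $s_d(k)=k$ ($k<d$); $s_i$ ($1\le i\le d-1$) swaps $i,i+1$. $\ell$ is Coxeter length. For $r'\ge 0$ let $\Lambda_{r',d}$ be the set of $\lambda=(\lambda_0,\dots,\lambda_{r'+1})\in\mathbb{N}^{r'+2}$ with sum $d$, and $\Lambda=\Lambda_{r,d}$. For $\lambda\in\Lambda_{r',d}$ put $\lambda_{0,i}=\lambda_0+\dots+\lambda_i$, let $W_\lambda$ be generated by $\{s_0,\dots,s_d\}\setminus\{s_{\lambda_{0,0}},\dots,s_{\lambda_{0,r'}}\}$, and define intervals $R_0^\lambda=[-\lambda_0..\lambda_0]$, $R_i^\lambda=(\lambda_{0,i-1}..\lambda_{0,i}]$ ($1\le i\le r'$), $R^\lambda_{r'+1}=[d+1-\lambda_{r'+1}..d+1+\lambda_{r'+1}]$, extended by $R^\lambda_{-i}=-R^\lambda_i$, $R^\lambda_{i+2r'+2}=R^\lambda_i+D$. Let $\mathcal{D}_\lambda=\{g\in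 W\mid\ell(wg)=\ell(w)+\ell(g)\ \forall w\in W_\lambda\}$ and $\mathcal{D}_{\lambda\mu}=\mathcal{D}_\lambda\cap\mathcal{D}_\mu^{-1}$. For $\lambda,\mu\in\Lambda$, $g\in W$, $\kappa(\lambda,g,\mu)$ is the $\mathbb{Z}\times\mathbb{Z}$ matrix with $(i,j)$-entry $|R_i^\lambda\cap g(R_j^\mu)|$. For such a matrix $A=(a_{ij})$ (which satisfies $a_{-i,-j}=a_{ij}=a_{i+n,j+n}$ with $a_{00},a_{r+1,r+1}$ odd) set $a'_{ii}=(a_{ii}-1)/2$ for $i\in\{0,r+1\}$. Define $\delta(A)$: choose $k_j\ge0$ ($0\le j\le r+1$) with $a_{ij}=0$ unless $|i-j|\le k_j$; $\delta(A)\in\Lambda_{\mathfrak r,d}$ with $\mathfrak r=k_0+\sum_{j=1}^r(2k_j+1)+k_{r+1}$ is the sequence consisting of $a'_{00},a_{10},a_{20},\dots,a_{k_0,0}$, followed, for $j=1,\dots,r$ in turn, by $a_{ij}$ for $i=j-k_j,j-k_j+1,\dots,j+k_j$, followed by $a_{r+1-k_{r+1},r+1},\dots,a_{r,r+1},a'_{r+1,r+1}$. (The subgroup $W_{\delta(A)}$ does not depend on the choice of the $k_j$.) *)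

theory Defs
  imports Main
begin

definition Dper :: "nat \<Rightarrow> int" where
  "Dper d = 2 * int d + 2"

definition Wgrp :: "nat \<Rightarrow> (int \<Rightarrow> int) set" where
  "Wgrp d = {g. bij g \<and> (\<forall>i. g (i + Dper d) = g i + Dper d) \<and> (\<forall>i. g (- i) = - g i)}"

(* Extension of a function given on 1..d to the unique element of W with these values
   (forced: g 0 = 0, g (d+1) = d+1). *)
definition extend :: "nat \<Rightarrow> (int \<Rightarrow> int) \<Rightarrow> int \<Rightarrow> int" where
  "extend d f x = (let D = Dper d; q = x div D; m = x mod D in
     if m = 0 then q * D
     else if m \<le> int d then f m + q * D
     else if m = int d + 1 then m + q * D
     else (q + 1) * D - f (D - m))"

definition sref :: "nat \<Rightarrow> nat \<Rightarrow> int \<Rightarrow> int" where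
  "sref d i = extend d (\<lambda>x.
     if i = 0 then (if x = 1 then -1 else x)
     else if i = d then (if x = int d then int d + 2 else x)
     else (if x = int i then x + 1 else if x = int i + 1 then x - 1 else x))"

definition wordprod :: "nat \<Rightarrow> nat list \<Rightarrow> int \<Rightarrow> int" where
  "wordprod d ws = foldr (\<lambda>i h. sref d i \<circ> h) ws id"

definition clen :: "nat \<Rightarrow> (int \<Rightarrow> int) \<Rightarrow> nat" where
  "clen d g = (LEAST n. \<exists>ws. set ws \<subseteq> {0..d} \<and> length ws = n \<and> wordprod d ws = g)"

(* subgroup generated by {s_j | j \<in> J} (the s_j are involutions, so it is the set of word products) *)
definition parabolic :: "nat \<Rightarrow> nat set \<Rightarrow> (int \<Rightarrow> int) set" where
  "parabolic d J = {wordprod d ws | ws. set ws \<subseteq> J}"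

definition Lam :: "nat \<Rightarrow> nat \<Rightarrow> nat list set" where
  "Lam r' d = {lam. length lam = r' + 2 \<and> sum_list lam = d}"

definition psum :: "nat list \<Rightarrow> nat \<Rightarrow> nat" where
  "psum lam i = sum_list (take (i + 1) lam)"

definition Jset :: "nat \<Rightarrow> nat list \<Rightarrow> nat set" where
  "Jset d lam = {0..d} - {psum lam i | i. i \<le> length lam - 2}"

definition Wpar :: "nat \<Rightarrow> nat list \<Rightarrow> (int \<Rightarrow> int) set" where
  "Wpar d lam = parabolic d (Jset d lam)"

definition Dset :: "nat \<Rightarrow> nat list \<Rightarrow> (int \<Rightarrow> int) set" where
  "Dset d lam = {g \<in> Wgrp d. \<forall>w \<in> Wpar d lam. clen d (w \<circ> g) = clen d w + clen d g}"

definition Dlm :: "nat \<Rightarrow> nat list \<Rightarrow> nat list \<Rightarrow> (int \<Rightarrow> int) set" where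
  "Dlm d lam mu = Dset d lam \<inter> (inv ` Dset d mu)"

definition Rbase :: "nat \<Rightarrow> nat list \<Rightarrow> nat \<Rightarrow> int set" where
  "Rbase d lam i = (let rr = length lam - 2 in
     if i = 0 then {- int (lam ! 0) .. int (lam ! 0)}
     else if i \<le> rr then {int (psum lam (i - 1)) <.. int (psum lam i)}
     else {int d + 1 - int (lam ! (rr + 1)) .. int d + 1 + int (lam ! (rr + 1))})"

(* R_i^lambda for all i \<in> Z, via R_{-i} = -R_i and R_{i+2r'+2} = R_i + D *)
definition Rset :: "nat \<Rightarrow> nat list \<Rightarrow> int \<Rightarrow> int set" where
  "Rset d lam i = (let rr = length lam - 2; n = 2 * int rr + 2; D = Dper d;
       q = i div n; m = i mod n in
     if m \<le> int rr + 1 then (\<lambda>x. x + q * D) ` Rbase d lam (nat m)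
     else (\<lambda>x. (q + 1) * D - x) ` Rbase d lam (nat (n - m)))"

definition kappa :: "nat \<Rightarrow> nat list \<Rightarrow> (int \<Rightarrow> int) \<Rightarrow> nat list \<Rightarrow> int \<Rightarrow> int \<Rightarrow> nat" where
  "kappa d lam g mu i j = card (Rset d lam i \<inter> g ` Rset d mu j)"

definition kvalid :: "nat \<Rightarrow> (int \<Rightarrow> int \<Rightarrow> nat) \<Rightarrow> (nat \<Rightarrow> nat) \<Rightarrow> bool" where
  "kvalid r A k = (\<forall>j \<le> r + 1. \<forall>i. A i (int j) \<noteq> 0 \<longrightarrow> \<bar>i - int j\<bar> \<le> int (k j))"

definition delta :: "nat \<Rightarrow> (int \<Rightarrow> int \<Rightarrow> nat) \<Rightarrow> (nat \<Rightarrow> nat) \<Rightarrow> nat list" where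
  "delta r A k =
     [(A 0 0 - 1) div 2]
     @ map (\<lambda>i. A (int i) 0) [1..<k 0 + 1]
     @ concat (map (\<lambda>j. map (\<lambda>i. A i (int j)) [int j - int (k j) .. int j + int (k j)]) [1..<r + 1])
     @ map (\<lambda>i. A i (int r + 1)) [int r + 1 - int (k (r + 1)) .. int r]
     @ [(A (int r + 1) (int r + 1) - 1) div 2]"

end

theory Submission
  imports Defs
begin

(*
  W acts on the integers as the affine Weyl group of type C~_d. Its reflections are the maps
  t_{a,b} exchanging the residue classes of a and b modulo D (and those of -a and -b), and the
  Coxeter length of w is the number of reflections whose pair w reverses; the exchange property
  needed for this is that a simple reflection reverses no pair except its own.

  Cutting Z at the gaps x | x+1 whose position modulo the symmetries x -> x + D, x -> -x - 1
  is one of the partial sums lambda_{0,i} divides Z into the blocks R_i^lambda. The parabolic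
  subgroup W_lambda is exactly the set of w that keep every x in its block, and inv g \<in> D_mu
  means that g is increasing inside every mu-block.

  For such g, column j of kappa(lambda, g, mu) splits the block R_j^mu into the consecutive
  pieces that g sends into the successive lambda-blocks. Hence the cut points of delta(A) are
  the cut points of mu together with the gaps across which g jumps over a cut of lambda, and
  w keeps the delta(A)-blocks iff it keeps the mu-blocks and g w g^-1 keeps the lambda-blocks.
*)

lemma int_step_mono_on:
  fixes f :: "int \<Rightarrow> 'a::order"
  assumes asc: "\<And>x. a \<le> x \<Longrightarrow> x < b \<Longrightarrow> f x \<le> f (x + 1)"
    and "a \<le> y" "y \<le> y'" "y' \<le> b"
  shows "f y \<le> f y'"
  using assms(3,4)
proof (induction y' rule: int_ge_induct)
  case (step z)
  have "f y \<le> f z" using step by simp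
  moreover have "f z \<le> f (z + 1)" using asc[of z] step assms(2) by simp
  ultimately show ?case by (rule order_trans)
qed simp

lemma int_step_strict_mono_on:
  fixes f :: "int \<Rightarrow> 'a::order"
  assumes asc: "\<And>x. a \<le> x \<Longrightarrow> x < b \<Longrightarrow> f x < f (x + 1)"
    and "a \<le> y" "y < y'" "y' \<le> b"
  shows "f y < f y'"
proof -
  have "f y < f (y + 1)" using asc[of y] assms by simp
  also have "f (y + 1) \<le> f y'"
  proof (rule int_step_mono_on[of a b f])
    fix x assume "a \<le> x" "x < b"
    thus "f x \<le> f (x + 1)" by (rule less_imp_le[OF asc])
  qed (use assms in simp_all)
  finally show ?thesis .
qed

lemma int_step_crossing:
  fixes f :: "int \<Rightarrow> 'a::linorder"
  assumes "f a \<le> e" "e < f b" "a < b"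
  shows "\<exists>i. a < i \<and> i \<le> b \<and> f (i - 1) \<le> e \<and> e < f i"
proof -
  have "a + 1 \<le> b" using assms(3) by simp
  thus ?thesis using assms(2)
  proof (induction b rule: int_ge_induct)
    case base thus ?case using assms(1) by (intro exI[of _ "a + 1"]) auto
  next
    case (step z)
    show ?case
    proof (cases "e < f z")
      case True
      then obtain i where "a < i" "i \<le> z" "f (i - 1) \<le> e" "e < f i" using step.IH by blast
      thus ?thesis by (intro exI[of _ i]) auto
    next
      case False thus ?thesis using step by (intro exI[of _ "z + 1"]) auto
    qed
  qed
qed

lemma int_div_mod_eqI:
  fixes x q m n :: int
  assumes "0 < n" "0 \<le> m" "m < n" "x = q * n + m"
  shows "x div n = q" "x mod n = m"
  using assms by (simp_all add: mod_pos_pos_trivial div_pos_pos_trivial add.commute)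

lemma image_plus_const_int: "(\<lambda>x. x + c) ` S = {y::int. y - c \<in> S}"
  by force

lemma image_minus_from_int: "(\<lambda>x. c - x) ` S = {y::int. c - y \<in> S}"
  by force

lemma card_insert_reflected:
  fixes T :: "int set"
  assumes "finite T" "(\<forall>y\<in>T. c < y) \<or> (\<forall>y\<in>T. y < c)"
  shows "card (insert c (T \<union> (\<lambda>y. 2 * c - y) ` T)) = 1 + 2 * card T"
proof -
  define R where "R = (\<lambda>y. 2 * c - y) ` T"
  have sum_ne: "y + z \<noteq> 2 * c" if "y \<in> T" "z \<in> T" for y z
  proof -
    from assms(2) have "(c < y \<and> c < z) \<or> (y < c \<and> z < c)" using that by auto
    thus ?thesis by linarith
  qed
  have "T \<inter> R = {}" unfolding R_def using sum_ne by fastforce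
  hence "card (T \<union> R) = card T + card R" using assms(1) unfolding R_def by (simp add: card_Un_disjoint)
  moreover have "card R = card T" unfolding R_def by (rule card_image) (simp add: inj_on_def)
  moreover have "c \<notin> T \<union> R" unfolding R_def using sum_ne by fastforce
  ultimately show ?thesis using assms(1) unfolding R_def by simp
qed

lemma sum_list_take_mono: "a \<le> b \<Longrightarrow> sum_list (take a (xs::nat list)) \<le> sum_list (take b xs)"
proof -
  assume "a \<le> b"
  then obtain c where "b = a + c" using le_Suc_ex by blast
  thus ?thesis by (simp add: take_add)
qed

lemma map_upt_eq_map_upto: "map (\<lambda>i. h (int i)) [a..<b] = map h [int a .. int b - 1]"
proof (induction b)
  case 0 thus ?case by simp
next
  case (Suc b)
  show ?case
  proof (cases "a \<le> b")
    case True
    have "[int a .. int (Suc b) - 1] = [int a .. int b - 1] @ [int b]"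
      using upto_rec2[of "int a" "int b"] True by simp
    thus ?thesis using Suc True by simp
  next
    case False thus ?thesis by simp
  qed
qed

fun psums :: "nat \<Rightarrow> nat list \<Rightarrow> nat set" where
  "psums s [] = {s}"
| "psums s (x # xs) = insert s (psums (s + x) xs)"

lemma psums_first: "s \<in> psums s xs" by (cases xs) auto

lemma psums_last: "s + sum_list xs \<in> psums s xs"
proof (induction xs arbitrary: s)
  case Nil thus ?case by simp
next
  case (Cons a xs)
  have "s + a + sum_list xs \<in> psums (s + a) xs" by (rule Cons.IH)
  thus ?case by (simp add: add.assoc)
qed

lemma psums_app: "psums s (xs @ ys) = psums s xs \<union> psums (s + sum_list xs) ys"
proof (induction xs arbitrary: s)
  case Nil thus ?case using psums_first by auto
next
  case (Cons x xs) thus ?case by (auto simp: add.assoc)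
qed

lemma psums_snoc: "psums s (xs @ [y]) = insert (s + sum_list xs + y) (psums s xs)"
  using psums_app[of s xs "[y]"] psums_last[of s xs] by auto

lemma psums_range: "x \<in> psums s xs \<Longrightarrow> s \<le> x \<and> x \<le> s + sum_list xs"
  by (induction xs arbitrary: s) fastforce+

lemma psums_take: "psums s xs = {s + sum_list (take t xs) | t. t \<le> length xs}"
proof (induction xs arbitrary: s)
  case Nil thus ?case by simp
next
  case (Cons x xs)
  show ?case
  proof
    show "psums s (x # xs) \<subseteq> {s + sum_list (take t (x # xs)) |t. t \<le> length (x # xs)}"
    proof
      fix z assume "z \<in> psums s (x # xs)"
      hence "z = s \<or> z \<in> psums (s + x) xs" by simp
      thus "z \<in> {s + sum_list (take t (x # xs)) |t. t \<le> length (x # xs)}"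
      proof
        assume "z = s" thus ?thesis by (intro CollectI exI[of _ 0]) simp
      next
        assume "z \<in> psums (s + x) xs"
        then obtain t where "t \<le> length xs" "z = s + x + sum_list (take t xs)" using Cons by auto
        thus ?thesis by (intro CollectI exI[of _ "Suc t"]) simp
      qed
    qed
  next
    show "{s + sum_list (take t (x # xs)) |t. t \<le> length (x # xs)} \<subseteq> psums s (x # xs)"
    proof
      fix z assume "z \<in> {s + sum_list (take t (x # xs)) |t. t \<le> length (x # xs)}"
      then obtain t where t: "t \<le> length (x # xs)" "z = s + sum_list (take t (x # xs))" by blast
      show "z \<in> psums s (x # xs)"
      proof (cases t)
        case 0 thus ?thesis using t by simp
      next
        case (Suc t')
        hence "z \<in> psums (s + x) xs" using t Cons by auto
        thus ?thesis by simp
      qed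
    qed
  qed
qed

lemma psums_map_diff_upto:
  fixes G :: "int \<Rightarrow> nat"
  assumes G: "mono G" and "lo \<le> hi + 1"
  shows "sum_list (map (\<lambda>i. G i - G (i - 1)) [lo..hi]) = G hi - G (lo - 1)
    \<and> psums s (map (\<lambda>i. G i - G (i - 1)) [lo..hi]) = {s + (G i - G (lo - 1)) | i. lo - 1 \<le> i \<and> i \<le> hi}"
proof -
  have "lo - 1 \<le> hi" using assms(2) by simp
  thus ?thesis
  proof (induction hi rule: int_ge_induct)
    case base
    have "(lo - 1 \<le> i \<and> i \<le> lo - 1) \<longleftrightarrow> i = lo - 1" for i by auto
    thus ?case by simp
  next
    case (step h)
    have up: "[lo..h + 1] = [lo..h] @ [h + 1]" using step.hyps upto_rec2[of lo "h + 1"] by simp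
    have m: "G (lo - 1) \<le> G h" "G h \<le> G (h + 1)" using step.hyps G by (simp_all add: monoD)
    have "(lo - 1 \<le> i \<and> i \<le> h + 1) \<longleftrightarrow> i = h + 1 \<or> (lo - 1 \<le> i \<and> i \<le> h)" for i
      using step.hyps by auto
    hence "{s + (G i - G (lo - 1)) | i. lo - 1 \<le> i \<and> i \<le> h + 1}
        = insert (s + (G (h + 1) - G (lo - 1))) {s + (G i - G (lo - 1)) | i. lo - 1 \<le> i \<and> i \<le> h}"
      by auto
    thus ?case using step.IH m unfolding up by (simp add: psums_snoc)
  qed
qed

lemma sublevel_eq_interval:
  fixes g :: "int \<Rightarrow> int"
  assumes asc: "\<And>x. s0 < x \<Longrightarrow> x < s1 \<Longrightarrow> g x < g (x + 1)" and c: "s0 < c" "c < s1"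
    and e: "g c \<le> e \<and> e < g (c + 1)"
  shows "{y. s0 < y \<and> y \<le> s1 \<and> g y \<le> e} = {s0<..c}" (is "?S = _")
proof -
  have mono: "g y \<le> g y'" if "s0 < y" "y \<le> y'" "y' \<le> s1" for y y'
    using int_step_mono_on[of "s0 + 1" s1 g y y'] asc[THEN less_imp_le] that by auto
  show ?thesis
  proof (intro set_eqI iffI)
    fix y assume y: "y \<in> ?S"
    have "y \<le> c"
    proof (rule ccontr)
      assume "\<not> y \<le> c"
      hence "g (c + 1) \<le> g y" using mono[of "c + 1" y] c y by simp
      thus False using y e by simp
    qed
    thus "y \<in> {s0<..c}" using y by simp
  next
    fix y assume "y \<in> {s0<..c}"
    thus "y \<in> ?S" using mono[of y c] e c by auto
  qed
qed

lemma card_sublevel_eq_iff: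
  fixes g :: "int \<Rightarrow> int"
  assumes asc: "\<And>x. s0 < x \<Longrightarrow> x < s1 \<Longrightarrow> g x < g (x + 1)" and c: "s0 < c" "c < s1"
  shows "card {y. s0 < y \<and> y \<le> s1 \<and> g y \<le> e} = nat (c - s0) \<longleftrightarrow> g c \<le> e \<and> e < g (c + 1)"
    (is "card ?S = _ \<longleftrightarrow> _")
proof
  assume card: "card ?S = nat (c - s0)"
  have mono: "g y \<le> g y'" if "s0 < y" "y \<le> y'" "y' \<le> s1" for y y'
    using int_step_mono_on[of "s0 + 1" s1 g y y'] asc[THEN less_imp_le] that by auto
  have fin: "finite ?S" by (rule finite_subset[of _ "{s0<..s1}"]) auto
  have "g c \<le> e"
  proof (rule ccontr)
    assume "\<not> g c \<le> e"
    have "y < c" if "y \<in> ?S" for y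
    proof (rule ccontr)
      assume "\<not> y < c"
      hence "g c \<le> g y" using mono[of c y] c that by simp
      thus False using that \<open>\<not> g c \<le> e\<close> by simp
    qed
    hence "?S \<subseteq> {s0<..c - 1}" by auto
    hence "card ?S \<le> nat (c - 1 - s0)" using card_mono[of "{s0<..c - 1}" ?S] by simp
    thus False using card c by simp
  qed
  moreover have "e < g (c + 1)"
  proof (rule ccontr)
    assume "\<not> e < g (c + 1)"
    have "g y \<le> e" if "y \<in> {s0<..c + 1}" for y
      using mono[of y "c + 1"] that c \<open>\<not> e < g (c + 1)\<close> by simp
    hence "{s0<..c + 1} \<subseteq> ?S" using c by auto
    hence "card {s0<..c + 1} \<le> card ?S" by (rule card_mono[OF fin])
    hence "nat (c + 1 - s0) \<le> card ?S" by simp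
    thus False using card c by simp
  qed
  ultimately show "g c \<le> e \<and> e < g (c + 1)" ..
qed (use sublevel_eq_interval[of s0 s1 g c, OF asc c] in simp)

text \<open>How one column of \<open>\<kappa>\<close> determines the cuts of \<open>\<delta>\<close> inside one \<open>\<mu>\<close>-block.\<close>

lemma monotone_block_counts:
  fixes E g :: "int \<Rightarrow> int" and s0 s1 lo hi :: int
  assumes Emono: "\<And>i j. i \<le> j \<Longrightarrow> E i \<le> E j"
    and s: "0 \<le> s0" "s0 \<le> s1"
    and ginc: "\<And>x. s0 < x \<Longrightarrow> x < s1 \<Longrightarrow> g x < g (x + 1)"
    and lohi: "lo \<le> hi + 1"
    and bnd: "\<And>y. s0 < y \<Longrightarrow> y \<le> s1 \<Longrightarrow> E (lo - 1) < g y \<and> g y \<le> E hi"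
  defines "F \<equiv> \<lambda>i. card {y. s0 < y \<and> y \<le> s1 \<and> E (i - 1) < g y \<and> g y \<le> E i}"
  shows "sum_list (map F [lo..hi]) = nat (s1 - s0)"
    and "\<And>c. s0 < c \<Longrightarrow> c < s1 \<Longrightarrow> (nat c \<in> psums (nat s0) (map F [lo..hi]) \<longleftrightarrow> (\<exists>i. g c \<le> E i \<and> E i < g (c + 1)))"
proof -
  define G where "G = (\<lambda>i. card {y. s0 < y \<and> y \<le> s1 \<and> g y \<le> E i})"
  have fin: "finite {y. s0 < y \<and> y \<le> s1 \<and> Q y}" for Q
    by (rule finite_subset[of _ "{s0<..s1}"]) auto
  have "G i \<le> G j" if "i \<le> j" for i j
    unfolding G_def using Emono[OF that] by (intro card_mono[OF fin]) auto
  hence Gmono: "mono G" by (rule monoI)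
  have "F i = G i - G (i - 1)" for i
  proof -
    have "{y. s0 < y \<and> y \<le> s1 \<and> E (i - 1) < g y \<and> g y \<le> E i}
        = {y. s0 < y \<and> y \<le> s1 \<and> g y \<le> E i} - {y. s0 < y \<and> y \<le> s1 \<and> g y \<le> E (i - 1)}" by auto
    moreover have "{y. s0 < y \<and> y \<le> s1 \<and> g y \<le> E (i - 1)} \<subseteq> {y. s0 < y \<and> y \<le> s1 \<and> g y \<le> E i}"
      using Emono[of "i - 1" i] by auto
    ultimately show ?thesis unfolding F_def G_def by (simp add: card_Diff_subset fin)
  qed
  hence FG: "F = (\<lambda>i. G i - G (i - 1))" by blast
  have "{y. s0 < y \<and> y \<le> s1 \<and> g y \<le> E (lo - 1)} = {}" using bnd by force
  hence G0: "G (lo - 1) = 0" unfolding G_def by (metis card.empty)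
  have "{y. s0 < y \<and> y \<le> s1 \<and> g y \<le> E hi} = {s0<..s1}" using bnd by auto
  hence Ghi: "G hi = nat (s1 - s0)" unfolding G_def by simp
  note tele = psums_map_diff_upto[OF Gmono lohi, folded FG, unfolded G0 diff_zero]
  show "sum_list (map F [lo..hi]) = nat (s1 - s0)" using tele Ghi by simp
  fix c assume c: "s0 < c" "c < s1"
  have "nat c \<in> psums (nat s0) (map F [lo..hi]) \<longleftrightarrow> (\<exists>i. lo - 1 \<le> i \<and> i \<le> hi \<and> G i = nat (c - s0))"
    using tele[of "nat s0"] s c by auto
  also have "\<dots> \<longleftrightarrow> (\<exists>i. lo - 1 \<le> i \<and> i \<le> hi \<and> g c \<le> E i \<and> E i < g (c + 1))"
    unfolding G_def using card_sublevel_eq_iff[of s0 s1 g c, OF ginc c] by simp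
  also have "\<dots> \<longleftrightarrow> (\<exists>i. g c \<le> E i \<and> E i < g (c + 1))"
  proof (intro iffI; elim exE conjE)
    fix i assume i: "g c \<le> E i" "E i < g (c + 1)"
    have "\<not> i \<le> lo - 1" using Emono[of i "lo - 1"] bnd[of c] c i by auto
    moreover have "\<not> hi < i" using Emono[of hi i] bnd[of "c + 1"] c i by auto
    ultimately show "\<exists>i. lo - 1 \<le> i \<and> i \<le> hi \<and> g c \<le> E i \<and> E i < g (c + 1)"
      using i by (intro exI[of _ i]) simp
  qed blast
  finally show "nat c \<in> psums (nat s0) (map F [lo..hi]) \<longleftrightarrow> (\<exists>i. g c \<le> E i \<and> E i < g (c + 1))" .
qed

text \<open>The complement of the generating set of \<open>Wpar\<close>: the partial sums \<open>\<lambda>\<^sub>0\<^sub>,\<^sub>i\<close>, \<open>i \<le> r\<close>.\<close>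

definition cuts :: "nat list \<Rightarrow> nat set" where "cuts lam = {psum lam i | i. i \<le> length lam - 2}"

lemma cuts_Cons_snoc: "cuts (a # M @ [b]) = psums a M"
proof -
  have "cuts (a # M @ [b]) = {psum (a # M @ [b]) i | i. i \<le> length M}" unfolding cuts_def by simp
  also have "\<dots> = {a + sum_list (take t M) | t. t \<le> length M}"
  proof -
    have "psum (a # M @ [b]) i = a + sum_list (take i M)" if "i \<le> length M" for i
      using that by (simp add: psum_def)
    thus ?thesis by (metis (no_types, lifting))
  qed
  finally show ?thesis using psums_take by simp
qed

locale affine_weyl =
  fixes d :: nat
  assumes d_ge_2: "2 \<le> d"
begin

abbreviation D :: int where "D \<equiv> Dper d"

lemma D_eq: "D = 2 * int d + 2" by (simp add: Dper_def)
lemma D_pos: "D > 0" by (simp add: Dper_def)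

definition congD :: "int \<Rightarrow> int \<Rightarrow> bool" where
  "congD x y \<longleftrightarrow> x mod D = y mod D"

lemma congD_iff: "congD x y \<longleftrightarrow> (\<exists>k. y = x + k * D)"
proof
  assume "congD x y"
  hence "x mod D = y mod D" by (simp add: congD_def)
  moreover have "x = x div D * D + x mod D" "y = y div D * D + y mod D" by simp_all
  ultimately have "y - x = (y div D - x div D) * D"
    by (metis (no_types, lifting) add_diff_cancel_right left_diff_distrib')
  hence "y = x + (y div D - x div D) * D" by simp
  thus "\<exists>k. y = x + k * D" by blast
next
  assume "\<exists>k. y = x + k * D"
  then obtain k where "y = x + k * D" by blast
  thus "congD x y" by (simp add: congD_def)
qed

lemma congD_imp_shift: "congD a p \<Longrightarrow> \<exists>k. a = p + k * D"
proof -
  assume "congD a p"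
  then obtain k where "p = a + k * D" unfolding congD_iff by blast
  hence "a = p + (- k) * D" by simp
  thus ?thesis by blast
qed

lemma congD_refl[simp]: "congD x x" by (simp add: congD_def)
lemma congD_sym: "congD x y \<Longrightarrow> congD y x" by (simp add: congD_def)
lemma congD_trans: "congD x y \<Longrightarrow> congD y z \<Longrightarrow> congD x z" by (simp add: congD_def)
lemma congD_add: "congD x y \<Longrightarrow> congD (x + c) (y + c)"
  by (auto simp: congD_iff algebra_simps)
lemma congD_neg: "congD x y \<Longrightarrow> congD (- x) (- y)"
  by (auto simp: congD_iff) (metis minus_add_distrib mult_minus_left)
lemma congD_neg_iff: "congD (- x) (- y) \<longleftrightarrow> congD x y"
  using congD_neg by fastforce
lemma congD_shift: "congD (x + k * D) y \<longleftrightarrow> congD x y"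
  by (simp add: congD_def)
lemma congD_shift2: "congD x (y + k * D) \<longleftrightarrow> congD x y"
  by (simp add: congD_def)
abbreviation W :: "(int \<Rightarrow> int) set" where "W \<equiv> Wgrp d"

lemma W_bij: "w \<in> W \<Longrightarrow> bij w" by (simp add: Wgrp_def)
lemma W_inj: "w \<in> W \<Longrightarrow> inj w" using W_bij bij_is_inj by blast
lemma W_period: "w \<in> W \<Longrightarrow> w (x + D) = w x + D" by (simp add: Wgrp_def)
lemma W_odd: "w \<in> W \<Longrightarrow> w (- x) = - w x" by (simp add: Wgrp_def)

lemma W_shift: assumes "w \<in> W" shows "w (x + k * D) = w x + k * D"
proof (induction k rule: int_induct[where k=0])
  case base then show ?case by simp
next
  case (step1 i) 
  have "w (x + (i+1) * D) = w (x + i * D + D)" by (simp add: algebra_simps)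
  also have "\<dots> = w (x + i*D) + D" using W_period[OF assms] by simp
  finally show ?case using step1 by (simp add: algebra_simps)
next
  case (step2 i)
  have "w (x + i * D) = w (x + (i - 1) * D + D)" by (simp add: algebra_simps)
  also have "\<dots> = w (x + (i - 1)*D) + D" using W_period[OF assms] by simp
  finally show ?case using step2 by (simp add: algebra_simps)
qed

lemma W_zero: "w \<in> W \<Longrightarrow> w 0 = 0"
  using W_odd[of w 0] by simp

lemma W_fixes_d1: assumes "w \<in> W" shows "w (int d + 1) = int d + 1"
proof -
  have "w (int d + 1) = w (- (int d + 1) + D)" by (simp add: D_eq)
  also have "\<dots> = w (- (int d + 1)) + D" using W_period[OF assms] .
  also have "\<dots> = - w (int d + 1) + D" using W_odd[OF assms, of "int d + 1"] by simp
  finally show ?thesis by (simp add: D_eq)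
qed

lemma W_congD_iff: assumes "w \<in> W" shows "congD (w x) (w y) \<longleftrightarrow> congD x y"
proof
  assume "congD x y" then obtain k where "y = x + k * D" by (auto simp: congD_iff)
  thus "congD (w x) (w y)" using W_shift[OF assms] by (auto simp: congD_iff)
next
  assume "congD (w x) (w y)" then obtain k where "w y = w x + k * D" by (auto simp: congD_iff)
  hence "w y = w (x + k * D)" using W_shift[OF assms] by simp
  hence "y = x + k * D" using W_inj[OF assms] by (simp add: inj_eq)
  thus "congD x y" by (auto simp: congD_iff)
qed

lemma W_congD_zero_iff: assumes "w \<in> W" shows "congD (w x) 0 \<longleftrightarrow> congD x 0"
  using W_congD_iff[OF assms, of x 0] W_zero[OF assms] by simp
lemma W_congD_d1_iff: assumes "w \<in> W" shows "congD (w x) (int d + 1) \<longleftrightarrow> congD x (int d + 1)"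
  using W_congD_iff[OF assms, of x "int d + 1"] W_fixes_d1[OF assms] by simp
lemma W_congD_neg_iff: assumes "w \<in> W" shows "congD (w x) (- w y) \<longleftrightarrow> congD x (- y)"
  using W_congD_iff[OF assms, of x "- y"] W_odd[OF assms] by simp

lemma W_id: "id \<in> W" by (simp add: Wgrp_def)

lemma W_comp: "v \<in> W \<Longrightarrow> w \<in> W \<Longrightarrow> v \<circ> w \<in> W"
  by (simp add: Wgrp_def bij_comp)

lemma W_inv: assumes "w \<in> W" shows "inv w \<in> W"
proof -
  have b: "bij w" using W_bij[OF assms] .
  have "inv w (x + D) = inv w x + D" for x
  proof -
    have "w (inv w x + D) = x + D" using W_period[OF assms] b by (simp add: bij_is_surj surj_f_inv_f)
    thus ?thesis using b by (metis bij_inv_eq_iff)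
  qed
  moreover have "inv w (- x) = - inv w x" for x
  proof -
    have "w (- inv w x) = - x" using W_odd[OF assms] b by (simp add: bij_is_surj surj_f_inv_f)
    thus ?thesis using b by (metis bij_inv_eq_iff)
  qed
  ultimately show ?thesis using b bij_imp_bij_inv by (auto simp: Wgrp_def)
qed

text \<open>Admissibility makes these four classes distinct.\<close>

definition reflection :: "int \<Rightarrow> int \<Rightarrow> int \<Rightarrow> int" where
  "reflection a b x = (if congD x a then x + (b - a) else if congD x b then x - (b - a)
     else if congD x (- a) then x - (b - a) else if congD x (- b) then x + (b - a) else x)"

definition admissible :: "int \<Rightarrow> int \<Rightarrow> bool" where
  "admissible a b \<longleftrightarrow> \<not> congD a 0 \<and> \<not> congD a (int d + 1) \<and> \<not> congD b 0 \<and> \<not> congD b (int d + 1) \<and> \<not> congD a b"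

lemma congD_self_neg_cases: assumes "congD a (- a)" shows "congD a 0 \<or> congD a (int d + 1)"
proof -
  let ?m = "a mod D"
  have "(- a) mod D = (if ?m = 0 then 0 else D - ?m)" by (rule zmod_zminus1_eq_if)
  with assms have h: "?m = (if ?m = 0 then 0 else D - ?m)" by (simp add: congD_def)
  show ?thesis
  proof (cases "?m = 0")
    case True thus ?thesis by (simp add: congD_def)
  next
    case False
    with h have "?m = int d + 1" by (simp add: D_eq)
    moreover have "(int d + 1) mod D = int d + 1" by (simp add: D_eq)
    ultimately show ?thesis by (simp add: congD_def)
  qed
qed

lemma admissible_not_self_neg: "admissible a b \<Longrightarrow> \<not> congD a (- a) \<and> \<not> congD b (- b)"
  using congD_self_neg_cases unfolding admissible_def by blast

lemma reflection_shift_arg: "reflection a b (x + k * D) = reflection a b x + k * D"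
  unfolding reflection_def by (simp add: congD_shift)

lemma congD_shift_diff: "congD x (y - k * D) \<longleftrightarrow> congD x y"
  using congD_shift2[of x y "- k"] by simp

lemma reflection_shift_pair: "reflection (a + k * D) (b + k * D) = reflection a b"
proof
  fix x
  show "reflection (a + k * D) (b + k * D) x = reflection a b x"
    unfolding reflection_def by (simp add: congD_shift2 congD_shift_diff)
qed

lemma congD_admissible_disjoint:
  assumes "admissible a b"
  shows "congD x a \<Longrightarrow> congD x b \<Longrightarrow> False" "congD x a \<Longrightarrow> congD x (- a) \<Longrightarrow> False"
    "congD x b \<Longrightarrow> congD x (- b) \<Longrightarrow> False" "congD x (- a) \<Longrightarrow> congD x (- b) \<Longrightarrow> False"
proof -
  have v: "\<not> congD a b" "\<not> congD a (- a)" "\<not> congD b (- b)" using assms admissible_not_self_neg unfolding admissible_def by auto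
  show "congD x a \<Longrightarrow> congD x b \<Longrightarrow> False" using v congD_sym congD_trans by blast
  show "congD x a \<Longrightarrow> congD x (- a) \<Longrightarrow> False" using v congD_sym congD_trans by blast
  show "congD x b \<Longrightarrow> congD x (- b) \<Longrightarrow> False" using v congD_sym congD_trans by blast
  show "congD x (- a) \<Longrightarrow> congD x (- b) \<Longrightarrow> False" using v congD_sym congD_trans congD_neg_iff by metis
qed

lemma reflection_neg_swap: assumes "admissible a b" shows "reflection (- b) (- a) = reflection a b"
proof
  fix x
  note c = congD_admissible_disjoint[OF assms, of x]
  show "reflection (- b) (- a) x = reflection a b x"
    apply (cases "congD x a"; cases "congD x b"; cases "congD x (- a)"; cases "congD x (- b)")
    apply (simp_all add: reflection_def)
    using c by blast+
qed

lemma congD_move1: "congD x a \<Longrightarrow> congD (x + (b - a)) b" using congD_add[of x a "b - a"] by simp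
lemma congD_move2: "congD x b \<Longrightarrow> congD (x - (b - a)) a" using congD_add[of x b "a - b"] by (simp add: algebra_simps)
lemma congD_move3: "congD x (- a) \<Longrightarrow> congD (x - (b - a)) (- b)" using congD_add[of x "- a" "a - b"] by (simp add: algebra_simps)
lemma congD_move4: "congD x (- b) \<Longrightarrow> congD (x + (b - a)) (- a)" using congD_add[of x "- b" "b - a"] by simp
lemmas congD_move = congD_move1 congD_move2 congD_move3 congD_move4
lemma congD_move_back1: "congD (x + (b - a)) b \<Longrightarrow> congD x a" using congD_add[of "x + (b - a)" b "a - b"] by simp
lemma congD_move_back2: "congD (x - (b - a)) a \<Longrightarrow> congD x b" using congD_add[of "x - (b - a)" a "b - a"] by simp
lemma congD_move_back3: "congD (x - (b - a)) (- b) \<Longrightarrow> congD x (- a)" using congD_add[of "x - (b - a)" "- b" "b - a"] by simp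
lemma congD_move_back4: "congD (x + (b - a)) (- a) \<Longrightarrow> congD x (- b)" using congD_add[of "x + (b - a)" "- a" "a - b"] by simp
lemmas congD_move_back = congD_move_back1 congD_move_back2 congD_move_back3 congD_move_back4

lemma reflection_involutive: assumes "admissible a b" shows "reflection a b (reflection a b x) = x"
proof -
  note c = congD_admissible_disjoint[OF assms]
  consider "congD x a" | "\<not> congD x a" "congD x b" | "\<not> congD x a" "\<not> congD x b" "congD x (- a)"
    | "\<not> congD x a" "\<not> congD x b" "\<not> congD x (- a)" "congD x (- b)"
    | "\<not> congD x a" "\<not> congD x b" "\<not> congD x (- a)" "\<not> congD x (- b)" by blast
  thus ?thesis
  proof cases
    case 1
    hence e: "congD (x + (b - a)) b" by (rule congD_move)
    hence "\<not> congD (x + (b - a)) a" using c by blast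
    thus ?thesis using 1 e by (simp add: reflection_def)
  next
    case 2
    hence e: "congD (x - (b - a)) a" by (intro congD_move)
    thus ?thesis using 2 by (simp add: reflection_def)
  next
    case 3
    hence e: "congD (x - (b - a)) (- b)" by (intro congD_move)
    have "\<not> congD (x - (b - a)) a" "\<not> congD (x - (b - a)) b" "\<not> congD (x - (b - a)) (- a)"
      using 3 e c congD_move_back by blast+
    thus ?thesis using 3 e by (simp add: reflection_def)
  next
    case 4
    hence e: "congD (x + (b - a)) (- a)" by (intro congD_move)
    have "\<not> congD (x + (b - a)) a" "\<not> congD (x + (b - a)) b"
      using 4 e c congD_move_back by blast+
    thus ?thesis using 4 e by (simp add: reflection_def)
  next
    case 5 thus ?thesis by (simp add: reflection_def)
  qed
qed

lemma reflection_odd: assumes "admissible a b" shows "reflection a b (- x) = - reflection a b x"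
proof -
  note c = congD_admissible_disjoint[OF assms]
  have e1: "congD (- x) a \<longleftrightarrow> congD x (- a)" "congD (- x) b \<longleftrightarrow> congD x (- b)"
    "congD (- x) (- a) \<longleftrightarrow> congD x a" "congD (- x) (- b) \<longleftrightarrow> congD x b"
    using congD_neg_iff by (metis minus_minus)+
  show ?thesis
    unfolding reflection_def e1
    apply (cases "congD x a"; cases "congD x b"; cases "congD x (- a)"; cases "congD x (- b)")
    apply (simp_all)
    using c[of x] by blast+
qed

lemma reflection_in_W: assumes "admissible a b" shows "reflection a b \<in> W"
proof -
  have "bij (reflection a b)"
    by (rule o_bij[of "reflection a b"]) (auto simp: reflection_involutive[OF assms])
  moreover have "reflection a b (x + D) = reflection a b x + D" for x using reflection_shift_arg[of a b x 1] by simp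
  ultimately show ?thesis using reflection_odd[OF assms] by (simp add: Wgrp_def)
qed

lemma W_diff_congD:
  assumes w: "w \<in> W" and "congD x a"
  shows "w (x + (b - a)) = w x + (w b - w a)"
proof -
  obtain k where x: "x = a + k * D" using congD_imp_shift[OF assms(2)] by blast
  have "w (x + (b - a)) = w (b + k * D)" by (simp add: x algebra_simps)
  thus ?thesis using W_shift[OF w, of b k] W_shift[OF w, of a k] x by simp
qed

lemma W_reflection_conj:
  assumes w: "w \<in> W"
  shows "w (reflection a b x) = reflection (w a) (w b) (w x)"
proof -
  have cls: "congD (w x) (w a) \<longleftrightarrow> congD x a" "congD (w x) (w b) \<longleftrightarrow> congD x b"
    "congD (w x) (- w a) \<longleftrightarrow> congD x (- a)" "congD (w x) (- w b) \<longleftrightarrow> congD x (- b)"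
    using W_congD_iff[OF w] W_congD_neg_iff[OF w] by blast+
  have shift: "w (x + (q - p)) = w x + (w q - w p)" if "congD x p" for p q
    using W_diff_congD[OF w that] .
  show ?thesis
    using shift[of a b] shift[of b a] shift[of "- a" "- b"] shift[of "- b" "- a"] W_odd[OF w, of a] W_odd[OF w, of b]
    unfolding reflection_def cls by (simp add: algebra_simps)
qed

lemma admissible_W_iff: assumes w: "w \<in> W" shows "admissible (w a) (w b) \<longleftrightarrow> admissible a b"
  unfolding admissible_def using W_congD_zero_iff[OF w] W_congD_d1_iff[OF w] W_congD_iff[OF w] by simp

lemma reflection_eq_cases:
  assumes "admissible a b" "admissible a' b'" "a < b" "a' < b'" "reflection a b = reflection a' b'"
  shows "(\<exists>k. a' = a + k * D \<and> b' = b + k * D) \<or> (\<exists>k. a' = - b + k * D \<and> b' = - a + k * D)"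
proof -
  have "reflection a' b' a' = b'" by (simp add: reflection_def)
  hence h: "reflection a b a' = b'" using assms(5) by simp
  consider "congD a' a" | "\<not> congD a' a" "congD a' b" | "\<not> congD a' a" "\<not> congD a' b" "congD a' (- a)"
    | "\<not> congD a' a" "\<not> congD a' b" "\<not> congD a' (- a)" "congD a' (- b)"
    | "\<not> congD a' a" "\<not> congD a' b" "\<not> congD a' (- a)" "\<not> congD a' (- b)" by blast
  thus ?thesis
  proof cases
    case 1
    then obtain k where "a' = a + k * D" using congD_iff congD_sym by blast
    moreover have "b' = a' + (b - a)" using h 1 by (simp add: reflection_def)
    ultimately show ?thesis by auto
  next
    case 2 thus ?thesis using h assms(3,4) by (simp add: reflection_def)
  next
    case 3 thus ?thesis using h assms(3,4) by (simp add: reflection_def)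
  next
    case 4
    then obtain k where "a' = - b + k * D" using congD_iff congD_sym by blast
    moreover have "b' = a' + (b - a)" using h 4 by (simp add: reflection_def)
    ultimately show ?thesis by auto
  next
    case 5 thus ?thesis using h assms(4) by (simp add: reflection_def)
  qed
qed

text \<open>A reflection is determined by its pair only up to the symmetries of \<open>W\<close>, so the
  inversions of \<open>w\<close> are collected as a set of reflections; its size is the Coxeter length.\<close>

definition inversions :: "(int \<Rightarrow> int) \<Rightarrow> (int \<Rightarrow> int) set" where
  "inversions w = {t. \<exists>a b. t = reflection a b \<and> a < b \<and> admissible a b \<and> w b < w a}"

definition ninv :: "(int \<Rightarrow> int) \<Rightarrow> nat" where "ninv w = card (inversions w)"

lemma reversed_reflection_well_defined:
  assumes w: "w \<in> W" and "admissible a b" "admissible a' b'" "a < b" "a' < b'" "reflection a b = reflection a' b'"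
  shows "w b < w a \<longleftrightarrow> w b' < w a'"
  using reflection_eq_cases[OF assms(2-6)]
proof
  assume "\<exists>k. a' = a + k * D \<and> b' = b + k * D"
  thus ?thesis using W_shift[OF w] by auto
next
  assume "\<exists>k. a' = - b + k * D \<and> b' = - a + k * D"
  then obtain k where k: "a' = - b + k * D" "b' = - a + k * D" by blast
  have "w a' = w (- b + k * D)" "w b' = w (- a + k * D)" using k by simp_all
  moreover have "w (- b + k * D) = w (- b) + k * D" "w (- a + k * D) = w (- a) + k * D"
    by (rule W_shift[OF w])+
  moreover have "w (- b) = - w b" "w (- a) = - w a" by (rule W_odd[OF w])+
  ultimately have "w a' = - w b + k * D" "w b' = - w a + k * D" by linarith+
  thus ?thesis by linarith
qed

lemma reflection_mem_inversions_iff: assumes w: "w \<in> W" and "admissible a b" "a < b"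
  shows "reflection a b \<in> inversions w \<longleftrightarrow> w b < w a"
proof
  assume "reflection a b \<in> inversions w"
  then obtain a' b' where "reflection a b = reflection a' b'" "a' < b'" "admissible a' b'" "w b' < w a'"
    unfolding inversions_def by blast
  thus "w b < w a" using reversed_reflection_well_defined[OF w assms(2) _ assms(3)] by blast
qed (use assms in \<open>auto simp: inversions_def\<close>)

lemma W_displacement_bounded: assumes w: "w \<in> W" shows "\<exists>M. \<forall>x. \<bar>w x - x\<bar> \<le> M"
proof -
  define M where "M = Max ((\<lambda>x. \<bar>w x - x\<bar>) ` {0..<D})"
  have "\<bar>w x - x\<bar> \<le> M" for x
  proof -
    have x: "x = x mod D + (x div D) * D" by simp
    have "w x = w (x mod D + (x div D) * D)" by simp
    also have "\<dots> = w (x mod D) + (x div D) * D" by (rule W_shift[OF w])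
    finally have "w x - x = w (x mod D) - x mod D" using x by linarith
    moreover have "x mod D \<in> {0..<D}" using D_pos by simp
    moreover have "\<bar>w (x mod D) - x mod D\<bar> \<le> M" unfolding M_def
      by (rule Max_ge) (use \<open>x mod D \<in> {0..<D}\<close> in auto)
    ultimately show ?thesis by simp
  qed
  thus ?thesis by blast
qed

lemma inversions_finite: assumes w: "w \<in> W" shows "finite (inversions w)"
proof -
  obtain M where M: "\<And>x. \<bar>w x - x\<bar> \<le> M" using W_displacement_bounded[OF w] by blast
  have "inversions w \<subseteq> (\<lambda>(a, b). reflection a b) ` ({0..<D} \<times> {0..D + 2 * M})"
  proof
    fix t assume "t \<in> inversions w"
    then obtain a b where t: "t = reflection a b" "a < b" "w b < w a" unfolding inversions_def by blast
    define k where "k = a div D"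
    define a0 where "a0 = a mod D"
    have a: "a = a0 + k * D" unfolding a0_def k_def by simp
    have "reflection a b = reflection a0 (b - k * D)" using reflection_shift_pair[of a0 k "b - k * D"] a by simp
    moreover have "a0 \<in> {0..<D}" unfolding a0_def using D_pos by simp
    moreover have "b - a \<le> 2 * M" using M[of a] M[of b] t by linarith
    hence "b - k * D \<in> {0..D + 2 * M}" using a \<open>a0 \<in> {0..<D}\<close> t(2) by auto
    ultimately show "t \<in> (\<lambda>(a, b). reflection a b) ` ({0..<D} \<times> {0..D + 2 * M})" using t(1)
      by (intro image_eqI[where x="(a0, b - k * D)"]) auto
  qed
  thus ?thesis by (rule finite_subset) auto
qed

text \<open>\<open>sref d i\<close> is the reflection exchanging \<open>simple_lo i\<close> and \<open>simple_hi i\<close>.\<close>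

definition simple_lo :: "nat \<Rightarrow> int" where "simple_lo i = (if i = 0 then -1 else int i)"
definition simple_hi :: "nat \<Rightarrow> int" where "simple_hi i = (if i = 0 then 1 else if i = d then int d + 2 else int i + 1)"

lemma extend_mod: "extend d f x = extend d f (x mod D) + (x div D) * D"
proof -
  have m: "(x mod D) mod D = x mod D" "(x mod D) div D = 0" using D_pos by simp_all
  show ?thesis unfolding extend_def Let_def m by (simp add: algebra_simps)
qed

lemma extend_small: "0 \<le> m \<Longrightarrow> m < D \<Longrightarrow>
  extend d f m = (if m = 0 then 0 else if m \<le> int d then f m else if m = int d + 1 then m else D - f (D - m))"
  unfolding extend_def Let_def by (simp add: div_pos_pos_trivial mod_pos_pos_trivial)

lemma reflection_mod: "reflection a b x = reflection a b (x mod D) + (x div D) * D"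
  using reflection_shift_arg[of a b "x mod D" "x div D"] by simp

lemma congD_small_iff: "0 \<le> m \<Longrightarrow> m < D \<Longrightarrow> congD m v \<longleftrightarrow> m = v mod D"
  by (simp add: congD_def mod_pos_pos_trivial)

lemma mod_D_small: "0 \<le> v \<Longrightarrow> v < D \<Longrightarrow> v mod D = v" by (simp add: mod_pos_pos_trivial)
lemma mod_D_neg_small: "0 < v \<Longrightarrow> v < D \<Longrightarrow> (- v) mod D = D - v"
  by (simp add: zmod_zminus1_eq_if mod_pos_pos_trivial)

lemma sref_0_eq_reflection_on_period:
  assumes "i = 0" "0 \<le> m" "m < D"
  shows "sref d i m = reflection (simple_lo i) (simple_hi i) m"
proof -
  have D: "D = 2 * int d + 2" by (rule D_eq)
  have d_ge_2_int: "int d \<ge> 2" using d_ge_2 by simp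
  have e: "congD m v \<longleftrightarrow> m = v mod D" for v using congD_small_iff[OF assms(2,3)] .
  have c: "(-1) mod D = D - 1" "1 mod D = 1" "(- (-1)) mod D = 1" "(-1::int) mod D = D - 1"
    using mod_D_neg_small[of 1] mod_D_small[of 1] D d_ge_2_int by simp_all
  have "sref d i m = (if m = 0 then 0 else if m \<le> int d then (if m = 1 then -1 else m)
      else if m = int d + 1 then m else D - (if D - m = 1 then -1 else D - m))"
    unfolding sref_def using assms(1) extend_small[OF assms(2,3)] by simp
  moreover have "reflection (simple_lo i) (simple_hi i) m = (if m = D - 1 then m + 2 else if m = 1 then m - 2 else m)"
    unfolding reflection_def simple_lo_def simple_hi_def e using assms(1) c by simp
  moreover consider "m = 0" | "m = 1" | "2 \<le> m" "m \<le> int d" | "m = int d + 1"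
    | "int d + 2 \<le> m" "m \<le> D - 2" | "m = D - 1" using assms(2,3) D by linarith
  ultimately show ?thesis using D d_ge_2_int by cases simp_all
qed

lemma sref_d_eq_reflection_on_period:
  assumes "i = d" "0 \<le> m" "m < D"
  shows "sref d i m = reflection (simple_lo i) (simple_hi i) m"
proof -
  have D: "D = 2 * int d + 2" by (rule D_eq)
  have d_ge_2_int: "int d \<ge> 2" using d_ge_2 by simp
  have e: "congD m v \<longleftrightarrow> m = v mod D" for v using congD_small_iff[OF assms(2,3)] .
  have c: "int d mod D = int d" "(int d + 2) mod D = int d + 2" "(- int d) mod D = int d + 2"
     "(- (int d + 2)) mod D = int d"
    using mod_D_neg_small[of "int d"] mod_D_small[of "int d"] mod_D_small[of "int d + 2"] mod_D_neg_small[of "int d + 2"] D d_ge_2_int by simp_all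
  have "sref d i m = (if m = 0 then 0 else if m \<le> int d then (if m = int d then int d + 2 else m)
      else if m = int d + 1 then m else D - (if D - m = int d then int d + 2 else D - m))"
    unfolding sref_def using assms(1) d_ge_2 extend_small[OF assms(2,3)] by simp
  moreover have "reflection (simple_lo i) (simple_hi i) m = (if m = int d then m + 2 else if m = int d + 2 then m - 2 else m)"
    unfolding reflection_def simple_lo_def simple_hi_def e using assms(1) c d_ge_2 by simp
  moreover consider "m = 0" | "1 \<le> m" "m < int d" | "m = int d" | "m = int d + 1" | "m = int d + 2"
    | "int d + 3 \<le> m" "m < D" using assms(2,3) D by linarith
  ultimately show ?thesis using D d_ge_2_int by cases simp_all
qed

lemma sref_mid_eq_reflection_on_period:
  assumes "0 < i" "i < d" "0 \<le> m" "m < D"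
  shows "sref d i m = reflection (simple_lo i) (simple_hi i) m"
proof -
  have D: "D = 2 * int d + 2" by (rule D_eq)
  have e: "congD m v \<longleftrightarrow> m = v mod D" for v using congD_small_iff[OF assms(3,4)] .
  have c: "int i mod D = int i" "(int i + 1) mod D = int i + 1" "(- int i) mod D = D - int i"
     "(- (int i + 1)) mod D = D - int i - 1"
  proof -
    show "int i mod D = int i" using assms D by (intro mod_D_small) linarith+
    show "(int i + 1) mod D = int i + 1" using assms D by (intro mod_D_small) linarith+
    show "(- int i) mod D = D - int i" using assms D by (intro mod_D_neg_small) linarith+
    have "(- (int i + 1)) mod D = D - (int i + 1)" using assms D by (intro mod_D_neg_small) linarith+
    thus "(- (int i + 1)) mod D = D - int i - 1" by simp
  qed
  have "sref d i m = (if m = 0 then 0 else if m \<le> int d then (if m = int i then m + 1 else if m = int i + 1 then m - 1 else m)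
      else if m = int d + 1 then m else D - (if D - m = int i then D - m + 1 else if D - m = int i + 1 then D - m - 1 else D - m))"
    unfolding sref_def using assms(1,2) extend_small[OF assms(3,4)] by simp
  moreover have "reflection (simple_lo i) (simple_hi i) m = (if m = int i then m + 1 else if m = int i + 1 then m - 1
      else if m = D - int i then m - 1 else if m = D - int i - 1 then m + 1 else m)"
    unfolding reflection_def simple_lo_def simple_hi_def e using assms(1,2) c by simp
  moreover consider "m = 0" | "1 \<le> m" "m < int i" | "m = int i" | "m = int i + 1"
    | "int i + 2 \<le> m" "m \<le> int d" | "m = int d + 1" | "int d + 2 \<le> m" "m < D - int i - 1"
    | "m = D - int i - 1" | "m = D - int i" | "D - int i < m" "m < D" using assms D by linarith
  ultimately show ?thesis using D assms(1,2) by cases simp_all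
qed

lemma sref_eq_reflection_on_period:
  assumes "i \<le> d" "0 \<le> m" "m < D"
  shows "sref d i m = reflection (simple_lo i) (simple_hi i) m"
  using sref_0_eq_reflection_on_period[OF _ assms(2,3)] sref_d_eq_reflection_on_period[OF _ assms(2,3)] sref_mid_eq_reflection_on_period[OF _ _ assms(2,3)] assms(1)
  by (cases "i = 0"; cases "i = d") auto

lemma sref_eq_reflection: assumes "i \<le> d" shows "sref d i = reflection (simple_lo i) (simple_hi i)"
proof
  fix x
  have m: "0 \<le> x mod D" "x mod D < D" using D_pos by simp_all
  have "sref d i x = sref d i (x mod D) + (x div D) * D"
    unfolding sref_def by (rule extend_mod)
  also have "\<dots> = reflection (simple_lo i) (simple_hi i) (x mod D) + (x div D) * D" using sref_eq_reflection_on_period[OF assms m] by simp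
  also have "\<dots> = reflection (simple_lo i) (simple_hi i) x" using reflection_mod[of "simple_lo i" "simple_hi i" x] by simp
  finally show "sref d i x = reflection (simple_lo i) (simple_hi i) x" .
qed

lemma mod_D_d1: "(int d + 1) mod D = int d + 1" using mod_D_small[of "int d + 1"] D_eq by simp

lemma simple_lo_hi:
  assumes "i \<le> d"
  shows "simple_lo i < simple_hi i" (is ?lt) and "admissible (simple_lo i) (simple_hi i)" (is ?adm)
    and "(0 < i \<and> i < d \<and> simple_hi i - simple_lo i = 1) \<or> (simple_hi i - simple_lo i = 2
      \<and> congD (simple_lo i) (- simple_hi i) \<and> congD (simple_hi i) (- simple_lo i)
      \<and> (congD (simple_lo i + 1) 0 \<or> congD (simple_lo i + 1) (int d + 1)))" (is ?kind)
proof -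
  have D: "D = 2 * int d + 2" by (rule D_eq)
  have d_ge_2_int: "int d \<ge> 2" using d_ge_2 by simp
  consider "i = 0" | "i = d" | "0 < i" "i < d" using assms by linarith
  then have "?lt \<and> ?adm \<and> ?kind"
  proof cases
    case 1
    have c: "(-1) mod D = D - 1" "1 mod D = 1" "(-1::int) mod D = D - 1"
      using mod_D_neg_small[of 1] mod_D_small[of 1] D d_ge_2_int by simp_all
    show ?thesis using 1 c D d_ge_2_int mod_D_d1 unfolding admissible_def congD_def simple_lo_def simple_hi_def by simp
  next
    case 2
    have c: "int d mod D = int d" "(int d + 2) mod D = int d + 2" "(- int d) mod D = int d + 2"
       "(- (int d + 2)) mod D = int d"
      using mod_D_neg_small[of "int d"] mod_D_small[of "int d"] mod_D_small[of "int d + 2"] mod_D_neg_small[of "int d + 2"] D d_ge_2_int by simp_all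
    show ?thesis using 2 c D d_ge_2_int mod_D_d1 unfolding admissible_def congD_def simple_lo_def simple_hi_def by simp
  next
    case 3
    have c: "int i mod D = int i" "(int i + 1) mod D = int i + 1"
      using mod_D_small[of "int i"] mod_D_small[of "int i + 1"] D 3 by simp_all
    show ?thesis using 3 c D mod_D_d1 unfolding admissible_def congD_def simple_lo_def simple_hi_def by simp
  qed
  thus ?lt ?adm ?kind by auto
qed

lemma sref_in_W: "i \<le> d \<Longrightarrow> sref d i \<in> W"
  using sref_eq_reflection reflection_in_W simple_lo_hi by simp

lemma sref_involutive: "i \<le> d \<Longrightarrow> sref d i (sref d i x) = x"
  using sref_eq_reflection reflection_involutive simple_lo_hi by simp

lemma sref_comp_self: "i \<le> d \<Longrightarrow> sref d i \<circ> sref d i = id"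
  using sref_involutive by auto

lemma sref_simple_lo: "i \<le> d \<Longrightarrow> sref d i (simple_lo i) = simple_hi i"
  using sref_eq_reflection by (simp add: reflection_def)

lemma sref_simple_hi: "i \<le> d \<Longrightarrow> sref d i (simple_hi i) = simple_lo i"
proof -
  assume i: "i \<le> d"
  have "sref d i (simple_hi i) = sref d i (sref d i (simple_lo i))" using sref_simple_lo[OF i] by simp
  thus ?thesis using sref_involutive[OF i] by simp
qed

lemma reflection_displacement_cases: "reflection p q x = x \<or> reflection p q x = x + (q - p) \<or> reflection p q x = x - (q - p)"
  by (simp add: reflection_def)

lemma reflection_moves_up: "p < q \<Longrightarrow> reflection p q x = x + (q - p) \<Longrightarrow> congD x p \<or> congD x (- q)"
  by (auto simp: reflection_def split: if_splits)

lemma reflection_moves_down: "p < q \<Longrightarrow> reflection p q x = x - (q - p) \<Longrightarrow> congD x q \<or> congD x (- p)"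
  by (auto simp: reflection_def split: if_splits)

lemma mult_D_small_eq_0: assumes "\<bar>k * D\<bar> < D" shows "k = 0"
proof (rule ccontr)
  assume "k \<noteq> 0"
  hence "1 \<le> \<bar>k\<bar>" by simp
  hence "1 * D \<le> \<bar>k\<bar> * D" using D_pos by (intro mult_right_mono) auto
  also have "\<dots> = \<bar>k * D\<bar>" using D_pos by (simp add: abs_mult)
  finally show False using assms by simp
qed

lemma reflection_eq_if_congD:
  assumes "congD a p" "congD b q" "\<bar>(b - a) - (q - p)\<bar> < D"
  shows "reflection a b = reflection p q"
proof -
  obtain k1 where k1: "a = p + k1 * D" using congD_imp_shift[OF assms(1)] by blast
  obtain k2 where k2: "b = q + k2 * D" using congD_imp_shift[OF assms(2)] by blast
  have "(b - a) - (q - p) = (k2 - k1) * D" using k1 k2 by (simp add: left_diff_distrib)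
  hence "k2 - k1 = 0" using assms(3) mult_D_small_eq_0[of "k2 - k1"] by simp
  hence "b = q + k1 * D" using k2 by simp
  thus ?thesis using k1 reflection_shift_pair by simp
qed

lemma mult_D_even: "\<exists>X. k * D = 2 * X"
  using D_eq by (intro exI[of _ "k * (int d + 1)"]) (simp add: algebra_simps)

lemma congD_neg_adjacent_False:
  assumes "congD a p" "congD b (- p)" "b - a = 1" shows False
proof -
  obtain k1 where k1: "a = p + k1 * D" using congD_imp_shift[OF assms(1)] by blast
  obtain k2 where k2: "b = - p + k2 * D" using congD_imp_shift[OF assms(2)] by blast
  obtain X1 where X1: "k1 * D = 2 * X1" using mult_D_even by blast
  obtain X2 where X2: "k2 * D = 2 * X2" using mult_D_even by blast
  have "1 = - 2 * p + 2 * X2 - 2 * X1" using k1 k2 X1 X2 assms(3) by simp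
  thus False by presburger
qed

lemma simple_reversal_moves_both:
  assumes i: "i \<le> d" and v: "admissible a b" and ab: "a < b" and r: "sref d i b < sref d i a"
  defines "p \<equiv> simple_lo i" and "q \<equiv> simple_hi i"
  shows "sref d i a = a + (q - p)" and "sref d i b = b - (q - p)"
proof -
  have s: "sref d i = reflection p q" unfolding p_def q_def using sref_eq_reflection[OF i] .
  have pq: "p < q" unfolding p_def q_def using simple_lo_hi[OF i] by auto
  have tyq: "q - p = 1 \<or> (q - p = 2 \<and> congD p (- q) \<and> congD q (- p) \<and> (congD (p + 1) 0 \<or> congD (p + 1) (int d + 1)))"
    unfolding p_def q_def using simple_lo_hi[OF i] by auto
  have na: "\<not> congD b 0" "\<not> congD b (int d + 1)" "\<not> congD a 0" "\<not> congD a (int d + 1)"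
    using v unfolding admissible_def by auto
  define u where "u = reflection p q a - a"
  define u' where "u' = reflection p q b - b"
  have uu': "b - a < u - u'" using r s unfolding u_def u'_def by simp
  have "u = 0 \<or> u = q - p \<or> u = - (q - p)"
    unfolding u_def using reflection_displacement_cases[of p q a] by auto
  moreover have "u' = 0 \<or> u' = q - p \<or> u' = - (q - p)"
    unfolding u'_def using reflection_displacement_cases[of p q b] by auto
  ultimately consider "u = q - p" "u' = - (q - p)" | "u = q - p" "u' = 0" | "u = 0" "u' = - (q - p)"
    using uu' pq ab by fastforce
  hence "u = q - p \<and> u' = - (q - p)"
  proof cases
    case 2
    have t: "q - p = 2" "congD p (- q)" "congD (p + 1) 0 \<or> congD (p + 1) (int d + 1)" using tyq uu' 2 ab by auto
    have "congD a p \<or> congD a (- q)" using reflection_moves_up[OF pq, of a] 2 unfolding u_def by simp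
    hence "congD a p" using t(2) congD_trans congD_sym by blast
    moreover have "b = a + 1" using uu' 2 t ab by simp
    ultimately have "congD b (p + 1)" using congD_add by simp
    thus ?thesis using t(3) na congD_trans by blast
  next
    case 3
    have t: "q - p = 2" "congD q (- p)" "congD (p + 1) 0 \<or> congD (p + 1) (int d + 1)" using tyq uu' 3 ab by auto
    have "congD b q \<or> congD b (- p)" using reflection_moves_down[OF pq, of b] 3 unfolding u'_def by simp
    hence "congD b q" using t(2) congD_trans congD_sym by blast
    moreover have "a = b - 1" using uu' 3 t ab by simp
    ultimately have "congD a (q - 1)" using congD_add[of b q "- 1"] by simp
    moreover have "q - 1 = p + 1" using t(1) by simp
    ultimately have "congD a (p + 1)" by simp
    thus ?thesis using t(3) na congD_trans by blast
  qed simp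
  thus "sref d i a = a + (q - p)" "sref d i b = b - (q - p)" using s unfolding u_def u'_def by simp_all
qed

text \<open>The exchange property in inversion form: the only reflection whose pair is reversed by a
  simple reflection is that simple reflection itself.\<close>

lemma reflection_reversed_by_simple:
  assumes i: "i \<le> d" and v: "admissible a b" and ab: "a < b" and r: "sref d i b < sref d i a"
  shows "reflection a b = sref d i"
proof -
  define p where "p = simple_lo i"
  define q where "q = simple_hi i"
  have s: "sref d i = reflection p q" unfolding p_def q_def using sref_eq_reflection[OF i] .
  have pq: "p < q" "admissible p q" unfolding p_def q_def using simple_lo_hi[OF i] by auto
  have tyq: "q - p = 1 \<or> (q - p = 2 \<and> congD p (- q) \<and> congD q (- p))"
    unfolding p_def q_def using simple_lo_hi[OF i] by auto
  have moves: "reflection p q a = a + (q - p)" "reflection p q b = b - (q - p)"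
    using simple_reversal_moves_both[OF assms] s unfolding p_def q_def by simp_all
  have ea: "congD a p \<or> congD a (- q)" using reflection_moves_up[OF pq(1) moves(1)] .
  have eb: "congD b q \<or> congD b (- p)" using reflection_moves_down[OF pq(1) moves(2)] .
  have small: "\<bar>(b - a) - (q - p)\<bar> < D" using r s moves ab tyq D_eq d_ge_2 by auto
  show ?thesis
  proof (cases "q - p = 1")
    case True
    have ba: "b - a = 1" using r s moves True ab by simp
    from ea eb show ?thesis
    proof (elim disjE)
      assume "congD a p" "congD b q" thus ?thesis using reflection_eq_if_congD small s by simp
    next
      assume "congD a p" "congD b (- p)" thus ?thesis using congD_neg_adjacent_False ba by blast
    next
      assume "congD a (- q)" "congD b q"
      thus ?thesis using congD_neg_adjacent_False[of a "- q" b] ba by simp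
    next
      assume "congD a (- q)" "congD b (- p)"
      thus ?thesis using reflection_eq_if_congD[of a "- q" b "- p"] small reflection_neg_swap[OF pq(2)] s by simp
    qed
  next
    case False
    hence "congD p (- q)" "congD q (- p)" using tyq by auto
    hence "congD a p" "congD b q" using ea eb congD_trans congD_sym by blast+
    thus ?thesis using reflection_eq_if_congD small s by simp
  qed
qed

abbreviation sr :: "nat \<Rightarrow> int \<Rightarrow> int" where "sr i \<equiv> sref d i"

lemma simple_conj_reflection: assumes i: "i \<le> d" shows "sr i \<circ> reflection a b \<circ> sr i = reflection (sr i a) (sr i b)"
proof
  fix y
  have "sr i (reflection a b (sr i y)) = reflection (sr i a) (sr i b) (sr i (sr i y))" by (rule W_reflection_conj[OF sref_in_W[OF i]])
  thus "(sr i \<circ> reflection a b \<circ> sr i) y = reflection (sr i a) (sr i b) y" using sref_involutive[OF i] by simp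
qed

lemma simple_mem_inversions_iff: assumes w: "w \<in> W" and i: "i \<le> d" shows "sr i \<in> inversions w \<longleftrightarrow> w (simple_hi i) < w (simple_lo i)"
  using reflection_mem_inversions_iff[OF w, of "simple_lo i" "simple_hi i"] simple_lo_hi[OF i] sref_eq_reflection[OF i] by simp

lemma simple_conj_involutive: "i \<le> d \<Longrightarrow> sr i \<circ> (sr i \<circ> t \<circ> sr i) \<circ> sr i = t"
  using sref_involutive by (simp add: fun_eq_iff)

lemma inversions_comp_simple_conj: assumes w: "w \<in> W" and i: "i \<le> d" and t: "t \<in> inversions (w \<circ> sr i)" "t \<noteq> sr i"
  shows "sr i \<circ> t \<circ> sr i \<in> inversions w"
proof -
  obtain a b where ab: "t = reflection a b" "a < b" "admissible a b" "w (sr i b) < w (sr i a)"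
    using t(1) unfolding inversions_def by auto
  have sW: "sr i \<in> W" using sref_in_W[OF i] .
  have "\<not> sr i b < sr i a" using reflection_reversed_by_simple[OF i ab(3,2)] ab(1) t(2) by auto
  moreover have "sr i a \<noteq> sr i b" using ab(2) W_inj[OF sW] by (metis inj_eq less_irrefl)
  ultimately have lt: "sr i a < sr i b" by linarith
  have "sr i \<circ> t \<circ> sr i = reflection (sr i a) (sr i b)" using simple_conj_reflection[OF i] ab(1) by simp
  moreover have "admissible (sr i a) (sr i b)" using admissible_W_iff[OF sW] ab(3) by simp
  ultimately show ?thesis using lt ab(4) unfolding inversions_def by auto
qed

lemma inversions_conj_comp_simple:
  assumes w: "w \<in> W" and i: "i \<le> d" and t: "t \<in> inversions w" "t \<noteq> sr i"
  shows "sr i \<circ> t \<circ> sr i \<in> inversions (w \<circ> sr i)"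
proof -
  have "w \<circ> sr i \<circ> sr i = w" using sref_comp_self[OF i] by (simp add: comp_assoc)
  thus ?thesis using inversions_comp_simple_conj[OF W_comp[OF w sref_in_W[OF i]] i, of t] t by simp
qed

lemma simple_mem_inversions_comp_iff: assumes w: "w \<in> W" and i: "i \<le> d"
  shows "sr i \<in> inversions (w \<circ> sr i) \<longleftrightarrow> sr i \<notin> inversions w"
proof -
  have wsW: "w \<circ> sr i \<in> W" using W_comp[OF w sref_in_W[OF i]] .
  have "sr i \<in> inversions (w \<circ> sr i) \<longleftrightarrow> w (simple_lo i) < w (simple_hi i)"
    using simple_mem_inversions_iff[OF wsW i] sref_simple_lo[OF i] sref_simple_hi[OF i] by simp
  moreover have "w (simple_lo i) \<noteq> w (simple_hi i)" using simple_lo_hi(1)[OF i] W_inj[OF w] by (metis inj_eq less_irrefl)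
  ultimately show ?thesis using simple_mem_inversions_iff[OF w i] by auto
qed

lemma inversions_comp_simple_eq: assumes w: "w \<in> W" and i: "i \<le> d"
  shows "inversions (w \<circ> sr i) - {sr i} = (\<lambda>t. sr i \<circ> t \<circ> sr i) ` (inversions w - {sr i})"
proof
  show "inversions (w \<circ> sr i) - {sr i} \<subseteq> (\<lambda>t. sr i \<circ> t \<circ> sr i) ` (inversions w - {sr i})"
  proof
    fix t assume t: "t \<in> inversions (w \<circ> sr i) - {sr i}"
    have "sr i \<circ> t \<circ> sr i \<in> inversions w" using inversions_comp_simple_conj[OF w i] t by auto
    moreover have "sr i \<circ> t \<circ> sr i \<noteq> sr i"
    proof
      assume "sr i \<circ> t \<circ> sr i = sr i"
      hence "sr i \<circ> (sr i \<circ> t \<circ> sr i) \<circ> sr i = sr i \<circ> sr i \<circ> sr i" by simp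
      thus False using simple_conj_involutive[OF i] sref_comp_self[OF i] t by simp
    qed
    ultimately show "t \<in> (\<lambda>t. sr i \<circ> t \<circ> sr i) ` (inversions w - {sr i})"
      using simple_conj_involutive[OF i, of t] by (intro image_eqI[where x="sr i \<circ> t \<circ> sr i"]) auto
  qed
next
  show "(\<lambda>t. sr i \<circ> t \<circ> sr i) ` (inversions w - {sr i}) \<subseteq> inversions (w \<circ> sr i) - {sr i}"
  proof
    fix t' assume "t' \<in> (\<lambda>t. sr i \<circ> t \<circ> sr i) ` (inversions w - {sr i})"
    then obtain t where t: "t \<in> inversions w" "t \<noteq> sr i" "t' = sr i \<circ> t \<circ> sr i" by auto
    have "t' \<in> inversions (w \<circ> sr i)" using inversions_conj_comp_simple[OF w i t(1,2)] t(3) by simp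
    moreover have "t' \<noteq> sr i"
    proof
      assume "t' = sr i"
      hence "sr i \<circ> t' \<circ> sr i = sr i \<circ> sr i \<circ> sr i" by simp
      thus False using simple_conj_involutive[OF i, of t] sref_comp_self[OF i] t by simp
    qed
    ultimately show "t' \<in> inversions (w \<circ> sr i) - {sr i}" by simp
  qed
qed

lemma ninv_comp_simple: assumes w: "w \<in> W" and i: "i \<le> d"
  shows "ninv (w \<circ> sr i) = (if sr i \<in> inversions w then ninv w - 1 else ninv w + 1)"
    "sr i \<in> inversions w \<Longrightarrow> ninv w \<ge> 1"
proof -
  have wsW: "w \<circ> sr i \<in> W" using W_comp[OF w sref_in_W[OF i]] .
  have f1: "finite (inversions w)" "finite (inversions (w \<circ> sr i))" using inversions_finite w wsW by auto
  have inj: "inj_on (\<lambda>t. sr i \<circ> t \<circ> sr i) (inversions w - {sr i})"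
    by (rule inj_on_inverseI[where g="\<lambda>t. sr i \<circ> t \<circ> sr i"]) (rule simple_conj_involutive[OF i])
  have c: "card (inversions (w \<circ> sr i) - {sr i}) = card (inversions w - {sr i})"
    using inversions_comp_simple_eq[OF w i] card_image[OF inj] by simp
  show "ninv (w \<circ> sr i) = (if sr i \<in> inversions w then ninv w - 1 else ninv w + 1)"
  proof (cases "sr i \<in> inversions w")
    case True
    hence "sr i \<notin> inversions (w \<circ> sr i)" using simple_mem_inversions_comp_iff[OF w i] by simp
    hence "card (inversions (w \<circ> sr i)) = card (inversions w) - 1" using c True f1 by (simp add: card_Diff_singleton)
    thus ?thesis using True unfolding ninv_def by simp
  next
    case False
    hence "sr i \<in> inversions (w \<circ> sr i)" using simple_mem_inversions_comp_iff[OF w i] by simp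
    hence "card (inversions (w \<circ> sr i)) - 1 = card (inversions w)" using c False f1 by (simp add: card_Diff_singleton)
    moreover have "card (inversions (w \<circ> sr i)) \<ge> 1" using \<open>sr i \<in> inversions (w \<circ> sr i)\<close> f1
      by (metis One_nat_def Suc_leI card_gt_0_iff empty_iff)
    ultimately show ?thesis using False unfolding ninv_def by simp
  qed
  show "sr i \<in> inversions w \<Longrightarrow> ninv w \<ge> 1" using f1 unfolding ninv_def
    by (metis One_nat_def Suc_leI card_gt_0_iff empty_iff)
qed

lemma ninv_id: "ninv id = 0"
proof -
  have "inversions id = {}" unfolding inversions_def by auto
  thus ?thesis unfolding ninv_def by simp
qed

text \<open>The gap between \<open>x\<close> and \<open>x + 1\<close>, reduced modulo \<open>x \<mapsto> x + D\<close> and \<open>x \<mapsto> -x - 1\<close>, is the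
  gap between \<open>gap_index x\<close> and \<open>gap_index x + 1\<close>, which \<open>sref d (nat (gap_index x))\<close> crosses.\<close>

definition gap_index :: "int \<Rightarrow> int" where
  "gap_index x = (if x mod D \<le> int d then x mod D else D - 1 - x mod D)"

lemma gap_index_range: "0 \<le> gap_index x \<and> gap_index x \<le> int d"
proof -
  have h: "0 \<le> x mod D" "x mod D < D" using D_pos by simp_all
  show ?thesis
  proof (cases "x mod D \<le> int d")
    case True thus ?thesis using h unfolding gap_index_def by simp
  next
    case False
    hence "gap_index x = D - 1 - x mod D" unfolding gap_index_def by simp
    thus ?thesis using h False D_eq by linarith
  qed
qed

lemma gap_index_small: "0 \<le> c \<Longrightarrow> c \<le> int d \<Longrightarrow> gap_index c = c"
  unfolding gap_index_def using D_eq by (simp add: mod_pos_pos_trivial)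

lemma periodic_shift: assumes "\<And>x. P (x + D) = P x" shows "P (x + k * D) = P x"
proof (induction k rule: int_induct[where k=0])
  case base then show ?case by simp
next
  case (step1 i)
  have "P (x + (i + 1) * D) = P ((x + i * D) + D)" by (rule arg_cong[where f=P]) (simp add: algebra_simps)
  thus ?case using step1 assms by simp
next
  case (step2 i)
  have "P (x + i * D) = P ((x + (i - 1) * D) + D)" by (rule arg_cong[where f=P]) (simp add: algebra_simps)
  thus ?case using step2 assms by simp
qed

lemma gap_index_invariant:
  assumes p1: "\<And>x. P (x + D) = P x" and p2: "\<And>x. P (- x - 1) = P x"
  shows "P x = P (gap_index x)"
proof -
  have "P x = P (x mod D + (x div D) * D)" by simp
  also have "\<dots> = P (x mod D)" by (rule periodic_shift[of P, OF p1])
  finally have h: "P x = P (x mod D)" .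
  show ?thesis
  proof (cases "x mod D \<le> int d")
    case True thus ?thesis using h unfolding gap_index_def by simp
  next
    case False
    have "P (x mod D) = P (- (x mod D) - 1)" using p2 by simp
    also have "\<dots> = P (- (x mod D) - 1 + D)" using p1 by simp
    finally show ?thesis using h False unfolding gap_index_def by (simp add: algebra_simps)
  qed
qed

lemma ascent_shift: assumes w: "w \<in> W"
  shows "(w (x + D) < w (x + D + 1)) = (w x < w (x + 1))"
        "(w (- x - 1) < w (- x - 1 + 1)) = (w x < w (x + 1))"
proof -
  have "w (x + D + 1) = w ((x + 1) + D)" by (rule arg_cong[where f=w]) simp
  also have "\<dots> = w (x + 1) + D" by (rule W_period[OF w])
  finally show "(w (x + D) < w (x + D + 1)) = (w x < w (x + 1))" using W_period[OF w, of x] by simp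
  have "w (- x - 1) = w (- (x + 1))" by (rule arg_cong[where f=w]) simp
  also have "\<dots> = - w (x + 1)" by (rule W_odd[OF w])
  finally have 1: "w (- x - 1) = - w (x + 1)" .
  have "w (- x - 1 + 1) = w (- x)" by (rule arg_cong[where f=w]) simp
  also have "\<dots> = - w x" by (rule W_odd[OF w])
  finally show "(w (- x - 1) < w (- x - 1 + 1)) = (w x < w (x + 1))" using 1 by simp
qed

lemma ascent_gap_index: assumes w: "w \<in> W"
  shows "(w x < w (x + 1)) = (w (gap_index x) < w (gap_index x + 1))"
  using gap_index_invariant[where P="\<lambda>x. w x < w (x + 1)"] ascent_shift[OF w] by blast

lemma W_ascending_eq_id: assumes w: "w \<in> W" and inc: "\<And>x. w x < w (x + 1)" shows "w = id"
proof -
  have s1: "w (x + 1) = w x + 1" for x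
  proof -
    obtain y where y: "w y = w x + 1" using W_bij[OF w] by (metis bij_pointE)
    have "\<not> y \<le> x"
    proof
      assume "y \<le> x"
      hence "w y \<le> w x" using int_step_strict_mono_on[of y x w y x, OF inc] by (cases "y = x") auto
      thus False using y by simp
    qed
    hence "x + 1 \<le> y" by simp
    hence "w (x + 1) \<le> w y" using int_step_strict_mono_on[of "x + 1" y w "x + 1" y, OF inc] by (cases "x + 1 = y") auto
    thus ?thesis using y inc[of x] by simp
  qed
  have "w x = x" for x
  proof (induction x rule: int_induct[where k=0])
    case base thus ?case using W_zero[OF w] by simp
  next
    case (step1 i) thus ?case using s1[of i] by simp
  next
    case (step2 i) thus ?case using s1[of "i - 1"] by simp
  qed
  thus ?thesis by auto
qed

lemma ascent_if_no_simple_descent: assumes w: "w \<in> W" and j: "j \<le> d" and nd: "\<not> w (simple_hi j) < w (simple_lo j)"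
  shows "w (int j) < w (int j + 1)"
proof -
  have inj: "inj w" using W_inj[OF w] .
  consider "j = 0" | "j = d" | "0 < j" "j < d" using j by linarith
  thus ?thesis
  proof cases
    case 1
    have "\<not> w 1 < w (-1)" using nd 1 unfolding simple_lo_def simple_hi_def by simp
    hence "0 \<le> w 1" using W_odd[OF w, of 1] by simp
    moreover have "w 1 \<noteq> w 0" by (simp add: inj_eq[OF inj])
    hence "w 1 \<noteq> 0" using W_zero[OF w] by simp
    ultimately show ?thesis using 1 W_zero[OF w] by simp
  next
    case 2
    have "\<not> w (int d + 2) < w (int d)" using nd 2 d_ge_2 unfolding simple_lo_def simple_hi_def by simp
    moreover have "w (int d + 2) = - w (int d) + D"
    proof -
      have "w (int d + 2) = w (- int d + D)" by (rule arg_cong[where f=w]) (simp add: D_eq)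
      also have "\<dots> = w (- int d) + D" by (rule W_period[OF w])
      also have "\<dots> = - w (int d) + D" using W_odd[OF w, of "int d"] by simp
      finally show ?thesis .
    qed
    ultimately have "w (int d) \<le> int d + 1" using D_eq by simp
    moreover have "w (int d) \<noteq> w (int d + 1)" by (simp add: inj_eq[OF inj])
    hence "w (int d) \<noteq> int d + 1" using W_fixes_d1[OF w] by simp
    ultimately show ?thesis using 2 W_fixes_d1[OF w] by simp
  next
    case 3
    have "\<not> w (int j + 1) < w (int j)" using nd 3 unfolding simple_lo_def simple_hi_def by simp
    moreover have "w (int j + 1) \<noteq> w (int j)" by (simp add: inj_eq[OF inj])
    ultimately show ?thesis by simp
  qed
qed

lemma W_ascent_if_no_simple_descent_at_gap:
  assumes w: "w \<in> W"
    and nd: "\<not> w (simple_hi (nat (gap_index x))) < w (simple_lo (nat (gap_index x)))"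
  shows "w x < w (x + 1)"
proof -
  define j where "j = nat (gap_index x)"
  have j: "gap_index x = int j" "j \<le> d" unfolding j_def using gap_index_range[of x] by auto
  have "w (int j) < w (int j + 1)" using ascent_if_no_simple_descent[OF w j(2)] nd unfolding j_def by blast
  thus ?thesis using ascent_gap_index[OF w, of x] j by simp
qed

lemma W_simple_descent_exists:
  assumes w: "w \<in> W" and ne: "w \<noteq> id"
  shows "\<exists>i \<le> d. w (simple_hi i) < w (simple_lo i)"
proof (rule ccontr)
  assume "\<not> ?thesis"
  hence "w x < w (x + 1)" for x
    using W_ascent_if_no_simple_descent_at_gap[OF w] gap_index_range[of x] by (simp add: nat_le_iff)
  thus False using W_ascending_eq_id[OF w] ne by blast
qed

lemma wordprod_Nil: "wordprod d [] = id" by (simp add: wordprod_def)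
lemma wordprod_Cons: "wordprod d (i # ws) = sr i \<circ> wordprod d ws" by (simp add: wordprod_def)
lemma wordprod_snoc: "wordprod d (ws @ [i]) = wordprod d ws \<circ> sr i"
  by (induction ws) (simp_all add: wordprod_def comp_assoc)

lemma wordprod_in_W: "set ws \<subseteq> {0..d} \<Longrightarrow> wordprod d ws \<in> W"
  by (induction ws) (auto simp: wordprod_Nil wordprod_Cons W_id intro!: W_comp sref_in_W)

lemma ninv_wordprod_le: "set ws \<subseteq> {0..d} \<Longrightarrow> ninv (wordprod d ws) \<le> length ws"
proof (induction ws rule: rev_induct)
  case Nil thus ?case by (simp only: wordprod_Nil ninv_id list.size(3) order_refl)
next
  case (snoc i ws)
  have i: "i \<le> d" using snoc by auto
  have W: "wordprod d ws \<in> W" using snoc wordprod_in_W by auto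
  have "ninv (wordprod d ws \<circ> sr i) \<le> ninv (wordprod d ws) + 1"
  proof (cases "sr i \<in> inversions (wordprod d ws)")
    case True
    hence "ninv (wordprod d ws \<circ> sr i) = ninv (wordprod d ws) - 1" using ninv_comp_simple(1)[OF W i] by simp
    thus ?thesis by linarith
  next
    case False
    hence "ninv (wordprod d ws \<circ> sr i) = ninv (wordprod d ws) + 1" using ninv_comp_simple(1)[OF W i] by simp
    thus ?thesis by linarith
  qed
  moreover have "ninv (wordprod d (ws @ [i])) = ninv (wordprod d ws \<circ> sr i)" by (simp only: wordprod_snoc)
  moreover have "ninv (wordprod d ws) \<le> length ws" using snoc by auto
  ultimately show ?case by simp
qed

lemma reduced_word_exists: "w \<in> W \<Longrightarrow> \<exists>ws. set ws \<subseteq> {0..d} \<and> length ws = ninv w \<and> wordprod d ws = w"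
proof (induction "ninv w" arbitrary: w rule: less_induct)
  case less
  show ?case
  proof (cases "w = id")
    case True thus ?thesis using wordprod_Nil ninv_id by (intro exI[of _ "[]"]) auto
  next
    case False
    then obtain i where i: "i \<le> d" "w (simple_hi i) < w (simple_lo i)" using W_simple_descent_exists less by blast
    have inv: "sr i \<in> inversions w" using simple_mem_inversions_iff[OF less(2) i(1)] i by simp
    have W': "w \<circ> sr i \<in> W" using W_comp[OF less(2) sref_in_W[OF i(1)]] .
    have N: "ninv (w \<circ> sr i) = ninv w - 1" "ninv w \<ge> 1" using ninv_comp_simple[OF less(2) i(1)] inv by auto
    then obtain ws where ws: "set ws \<subseteq> {0..d}" "length ws = ninv (w \<circ> sr i)" "wordprod d ws = w \<circ> sr i"
      using less(1)[OF _ W'] by fastforce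
    have "wordprod d (ws @ [i]) = w \<circ> sr i \<circ> sr i" using ws(3) wordprod_snoc by simp
    also have "\<dots> = w" using sref_comp_self[OF i(1)] by (simp add: comp_assoc)
    finally show ?thesis using ws N i(1) by (intro exI[of _ "ws @ [i]"]) auto
  qed
qed

lemma clen_eq_ninv: assumes w: "w \<in> W" shows "clen d w = ninv w"
  unfolding clen_def
proof (rule Least_equality)
  show "\<exists>ws. set ws \<subseteq> {0..d} \<and> length ws = ninv w \<and> wordprod d ws = w" using reduced_word_exists[OF w] .
next
  fix n assume "\<exists>ws. set ws \<subseteq> {0..d} \<and> length ws = n \<and> wordprod d ws = w"
  then obtain ws where "set ws \<subseteq> {0..d}" "length ws = n" "wordprod d ws = w" by blast
  thus "ninv w \<le> n" using ninv_wordprod_le by fastforce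
qed

lemma wordprod_rev_comp: "set ws \<subseteq> {0..d} \<Longrightarrow> wordprod d (rev ws) \<circ> wordprod d ws = id"
proof (induction ws)
  case Nil thus ?case by (simp add: wordprod_Nil)
next
  case (Cons i ws)
  have i: "i \<le> d" using Cons by auto
  have "wordprod d (rev (i # ws)) \<circ> wordprod d (i # ws) = wordprod d (rev ws) \<circ> (sr i \<circ> sr i) \<circ> wordprod d ws"
    by (simp add: wordprod_snoc wordprod_Cons comp_assoc)
  thus ?case using Cons sref_comp_self[OF i] by simp
qed

lemma inv_wordprod: assumes "set ws \<subseteq> {0..d}" shows "inv (wordprod d ws) = wordprod d (rev ws)"
proof (rule inv_unique_comp)
  show "wordprod d (rev ws) \<circ> wordprod d ws = id" using wordprod_rev_comp[OF assms] .
  show "wordprod d ws \<circ> wordprod d (rev ws) = id" using wordprod_rev_comp[of "rev ws"] assms by simp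
qed

lemma ninv_inv_le: assumes w: "w \<in> W" shows "ninv (inv w) \<le> ninv w"
proof -
  obtain ws where ws: "set ws \<subseteq> {0..d}" "length ws = ninv w" "wordprod d ws = w" using reduced_word_exists[OF w] by blast
  have "inv w = wordprod d (rev ws)" using inv_wordprod[OF ws(1)] ws(3) by simp
  thus ?thesis using ninv_wordprod_le[of "rev ws"] ws by simp
qed

lemma ninv_inv: assumes w: "w \<in> W" shows "ninv (inv w) = ninv w"
proof -
  have "ninv (inv (inv w)) \<le> ninv (inv w)" using ninv_inv_le W_inv[OF w] by blast
  moreover have "inv (inv w) = w" using W_bij[OF w] by (simp add: inv_inv_eq)
  ultimately show ?thesis using ninv_inv_le[OF w] by simp
qed

lemma ninv_simple: "i \<le> d \<Longrightarrow> ninv (sr i) = 1"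
proof -
  assume i: "i \<le> d"
  have n: "sr i \<notin> inversions id" unfolding inversions_def by auto
  have "ninv (id \<circ> sr i) = (if sr i \<in> inversions id then ninv id - 1 else ninv id + 1)" by (rule ninv_comp_simple(1)[OF W_id i])
  hence "ninv (sr i) = ninv id + 1" using n by (simp only: id_comp if_False)
  thus ?thesis using ninv_id by simp
qed

text \<open>A set \<open>X \<subseteq> {0..d}\<close> of gap indices cuts \<open>\<int>\<close> into blocks; \<open>same_block X y z\<close>
  says that no cut lies between \<open>y\<close> and \<open>z\<close>.\<close>

definition is_cut :: "nat set \<Rightarrow> int \<Rightarrow> bool" where "is_cut X x \<longleftrightarrow> nat (gap_index x) \<in> X"

definition same_block :: "nat set \<Rightarrow> int \<Rightarrow> int \<Rightarrow> bool" where
  "same_block X y z \<longleftrightarrow> (\<forall>x. min y z \<le> x \<and> x < max y z \<longrightarrow> \<not> is_cut X x)"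

definition block_stab :: "nat set \<Rightarrow> (int \<Rightarrow> int) set" where
  "block_stab X = {w \<in> W. \<forall>x. same_block X (w x) x}"

lemma same_block_refl: "same_block X x x" unfolding same_block_def by auto
lemma same_block_sym: "same_block X x y \<Longrightarrow> same_block X y x" unfolding same_block_def by (simp add: min.commute max.commute)
lemma same_block_trans: "same_block X x y \<Longrightarrow> same_block X y z \<Longrightarrow> same_block X x z"
  unfolding same_block_def by (metis linorder_not_le max.cobounded1 max.cobounded2 min.cobounded1 min.cobounded2 min_le_iff_disj le_max_iff_disj order.strict_trans2 order_trans)

lemma same_block_separated: assumes "same_block X u x" "same_block X v y" "x \<le> c" "c < y" "is_cut X c"
  shows "u \<le> c \<and> c < v"
proof
  show "u \<le> c"
  proof (rule ccontr)
    assume "\<not> u \<le> c"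
    hence "min u x \<le> c \<and> c < max u x" using assms(3) by auto
    thus False using assms(1,5) unfolding same_block_def by blast
  qed
  show "c < v"
  proof (rule ccontr)
    assume "\<not> c < v"
    hence "min v y \<le> c \<and> c < max v y" using assms(4) by auto
    thus False using assms(2,5) unfolding same_block_def by blast
  qed
qed

lemma gap_index_congD: "congD y z \<Longrightarrow> gap_index y = gap_index z" unfolding gap_index_def congD_def by simp

lemma gap_index_reflect: "gap_index (- z - 1) = gap_index z"
proof -
  define m where "m = z mod D"
  have m: "0 \<le> m" "m < D" unfolding m_def using D_pos by simp_all
  have z: "z = m + (z div D) * D" unfolding m_def by simp
  have a: "(- (z div D) - 1) * D = - ((z div D) * D) - D" by (simp add: algebra_simps)
  have eq: "- z - 1 = (D - 1 - m) + (- (z div D) - 1) * D" using z a by linarith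
  have "(- z - 1) mod D = ((D - 1 - m) + (- (z div D) - 1) * D) mod D"
    by (rule arg_cong[where f="\<lambda>u. u mod D"]) (rule eq)
  also have "\<dots> = (D - 1 - m) mod D" by (rule mod_mult_self1)
  finally have "(- z - 1) mod D = (D - 1 - m) mod D" .
  also have "\<dots> = D - 1 - m" using m by (simp add: mod_pos_pos_trivial)
  finally have e: "(- z - 1) mod D = D - 1 - m" .
  show ?thesis unfolding gap_index_def e m_def[symmetric] using D_eq by auto
qed

lemma gap_index_simple_span: assumes j: "j \<le> d" and t: "0 \<le> t" "t < simple_hi j - simple_lo j" shows "gap_index (simple_lo j + t) = int j"
proof -
  have D: "D = 2 * int d + 2" by (rule D_eq)
  consider "j = 0" | "j = d" | "0 < j" "j < d" using j by linarith
  thus ?thesis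
  proof cases
    case 1
    hence "t = 0 \<or> t = 1" using t unfolding simple_lo_def simple_hi_def by auto
    moreover have "gap_index (-1) = 0" using gap_index_reflect[of 0] gap_index_small[of 0] by simp
    moreover have "gap_index 0 = 0" using gap_index_small[of 0] by simp
    ultimately show ?thesis using 1 unfolding simple_lo_def by auto
  next
    case 2
    hence "t = 0 \<or> t = 1" using t d_ge_2 unfolding simple_lo_def simple_hi_def by auto
    moreover have "gap_index (int d) = int d" using gap_index_small by simp
    moreover have "gap_index (int d + 1) = int d"
      unfolding gap_index_def using D by (simp add: mod_pos_pos_trivial)
    ultimately show ?thesis using 2 d_ge_2 unfolding simple_lo_def by auto
  next
    case 3
    hence "t = 0" using t unfolding simple_lo_def simple_hi_def by auto
    thus ?thesis using 3 gap_index_small[of "int j"] unfolding simple_lo_def by simp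
  qed
qed

lemma simple_same_block: assumes j: "j \<le> d" "j \<notin> X" shows "same_block X (sr j x) x"
proof -
  define p where "p = simple_lo j"
  define q where "q = simple_hi j"
  have s: "sr j = reflection p q" unfolding p_def q_def using sref_eq_reflection[OF j(1)] .
  have pq: "p < q" unfolding p_def q_def using simple_lo_hi[OF j(1)] by auto
  have cr: "0 \<le> t \<Longrightarrow> t < q - p \<Longrightarrow> gap_index (p + t) = int j" for t unfolding p_def q_def using gap_index_simple_span[OF j(1)] by simp
  have nc: "\<not> is_cut X y" if "gap_index y = int j" for y using that j(2) unfolding is_cut_def by simp
  have up: "same_block X (x + (q - p)) x" if "congD x p" for x
    unfolding same_block_def
  proof (intro allI impI)
    fix y assume y: "min (x + (q - p)) x \<le> y \<and> y < max (x + (q - p)) x"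
    hence "congD y (p + (y - x))" using congD_add[OF that, of "y - x"] by simp
    moreover have "0 \<le> y - x" "y - x < q - p" using y pq by auto
    ultimately show "\<not> is_cut X y" using gap_index_congD cr nc by metis
  qed
  have up2: "same_block X (x + (q - p)) x" if "congD x (- q)" for x
    unfolding same_block_def
  proof (intro allI impI)
    fix y assume y: "min (x + (q - p)) x \<le> y \<and> y < max (x + (q - p)) x"
    hence "congD y (- q + (y - x))" using congD_add[OF that, of "y - x"] by simp
    moreover have "- q + (y - x) = - (p + (q - p - 1 - (y - x))) - 1" by simp
    moreover have "0 \<le> q - p - 1 - (y - x)" "q - p - 1 - (y - x) < q - p" using y pq by auto
    ultimately show "\<not> is_cut X y" using gap_index_congD cr nc gap_index_reflect by metis
  qed
  have dn: "same_block X (x - (q - p)) x" if "congD x q" for x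
  proof -
    have "congD (x - (q - p)) p" using congD_move2[OF that] .
    hence "same_block X (x - (q - p) + (q - p)) (x - (q - p))" by (rule up)
    thus ?thesis using same_block_sym by simp
  qed
  have dn2: "same_block X (x - (q - p)) x" if "congD x (- p)" for x
  proof -
    have "congD (x - (q - p)) (- q)" using congD_move3[OF that] .
    hence "same_block X (x - (q - p) + (q - p)) (x - (q - p))" by (rule up2)
    thus ?thesis using same_block_sym by simp
  qed
  show ?thesis unfolding s reflection_def using up up2 dn dn2 same_block_refl by auto
qed

lemma simple_in_block_stab: "j \<le> d \<Longrightarrow> j \<notin> X \<Longrightarrow> sr j \<in> block_stab X"
  unfolding block_stab_def using sref_in_W simple_same_block by auto

lemma block_stab_comp: "v \<in> block_stab X \<Longrightarrow> w \<in> block_stab X \<Longrightarrow> v \<circ> w \<in> block_stab X"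
  unfolding block_stab_def using W_comp same_block_trans by fastforce

lemma block_stab_id: "id \<in> block_stab X" unfolding block_stab_def using W_id same_block_refl by auto

lemma wordprod_in_block_stab: "set ws \<subseteq> {0..d} - X \<Longrightarrow> wordprod d ws \<in> block_stab X"
proof (induction ws)
  case Nil thus ?case by (simp only: wordprod_Nil) (rule block_stab_id)
next
  case (Cons i ws)
  have "sr i \<circ> wordprod d ws \<in> block_stab X" using Cons by (intro block_stab_comp simple_in_block_stab) auto
  thus ?case by (simp only: wordprod_Cons)
qed

lemma block_stab_wordprod: "w \<in> block_stab X \<Longrightarrow> \<exists>ws. set ws \<subseteq> {0..d} - X \<and> wordprod d ws = w"
proof (induction "ninv w" arbitrary: w rule: less_induct)
  case less
  have w: "w \<in> W" and sb: "\<And>x. same_block X (w x) x" using less(2) unfolding block_stab_def by auto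
  show ?case
  proof (cases "w = id")
    case True thus ?thesis using wordprod_Nil by (intro exI[of _ "[]"]) auto
  next
    case False
    then obtain i where i: "i \<le> d" "w (simple_hi i) < w (simple_lo i)" using W_simple_descent_exists w by blast
    have iX: "i \<notin> X"
    proof
      assume "i \<in> X"
      hence c: "is_cut X (int i)" unfolding is_cut_def using gap_index_small[of "int i"] i(1) by simp
      have "simple_lo i \<le> int i" "int i < simple_hi i" unfolding simple_lo_def simple_hi_def using i(1) by auto
      hence "w (simple_lo i) \<le> int i \<and> int i < w (simple_hi i)" using same_block_separated[OF sb sb _ _ c] by blast
      thus False using i(2) by simp
    qed
    have inv: "sr i \<in> inversions w" using simple_mem_inversions_iff[OF w i(1)] i by simp
    have S': "w \<circ> sr i \<in> block_stab X" using block_stab_comp[OF less(2) simple_in_block_stab[OF i(1) iX]] .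
    have N: "ninv (w \<circ> sr i) < ninv w" using ninv_comp_simple[OF w i(1)] inv by auto
    obtain ws where ws: "set ws \<subseteq> {0..d} - X" "wordprod d ws = w \<circ> sr i"
      using less(1)[OF N S'] by blast
    have "wordprod d (ws @ [i]) = w \<circ> sr i \<circ> sr i" using ws(2) wordprod_snoc by simp
    also have "\<dots> = w" using sref_comp_self[OF i(1)] by (simp add: comp_assoc)
    finally show ?thesis using ws i(1) iX by (intro exI[of _ "ws @ [i]"]) auto
  qed
qed

lemma parabolic_eq_block_stab: "parabolic d ({0..d} - X) = block_stab X"
  unfolding parabolic_def using wordprod_in_block_stab block_stab_wordprod by blast

lemma Wpar_eq_block_stab: "Wpar d lam = block_stab (cuts lam)"
  unfolding Wpar_def Jset_def cuts_def using parabolic_eq_block_stab by simp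

lemma Dset_no_simple_descent:
  assumes h: "h \<in> Dset d mu" and i: "i \<in> Jset d mu"
  shows "\<not> inv h (simple_hi i) < inv h (simple_lo i)"
proof
  assume desc: "inv h (simple_hi i) < inv h (simple_lo i)"
  have hW: "h \<in> W" using h unfolding Dset_def by simp
  define g where "g = inv h"
  have g_in_W: "g \<in> W" unfolding g_def using W_inv[OF hW] .
  have id: "i \<le> d" using i unfolding Jset_def by auto
  have "sr i \<in> Wpar d mu" unfolding Wpar_def parabolic_def
    using i by (intro CollectI exI[of _ "[i]"]) (simp add: wordprod_Cons wordprod_Nil)
  hence c: "clen d (sr i \<circ> h) = clen d (sr i) + clen d h" using h unfolding Dset_def by auto
  have invg: "inv g = h" unfolding g_def using W_bij[OF hW] by (simp add: inv_inv_eq)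
  have invs: "inv (sr i) = sr i" using sref_comp_self[OF id] by (intro inv_unique_comp) auto
  have "inv (g \<circ> sr i) = inv (sr i) \<circ> inv g"
    using W_bij[OF g_in_W] W_bij[OF sref_in_W[OF id]] by (simp add: o_inv_distrib)
  hence e: "sr i \<circ> h = inv (g \<circ> sr i)" using invg invs by simp
  have gsW: "g \<circ> sr i \<in> W" using W_comp[OF g_in_W sref_in_W[OF id]] .
  have inv: "sr i \<in> inversions g" using simple_mem_inversions_iff[OF g_in_W id] desc g_def by simp
  have "clen d (sr i \<circ> h) = ninv (g \<circ> sr i)" using e clen_eq_ninv W_inv[OF gsW] ninv_inv[OF gsW] by simp
  also have "\<dots> = ninv g - 1" using ninv_comp_simple(1)[OF g_in_W id] inv by simp
  finally have 1: "clen d (sr i \<circ> h) = ninv g - 1" .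
  have "clen d h = ninv h" using clen_eq_ninv[OF hW] .
  also have "\<dots> = ninv g" unfolding g_def using ninv_inv[OF hW] by simp
  finally have 2: "clen d h = ninv g" .
  have 3: "clen d (sr i) = 1" using clen_eq_ninv[OF sref_in_W[OF id]] ninv_simple[OF id] by simp
  show False using c 1 2 3 by simp
qed

lemma Dset_inv_ascent:
  assumes h: "h \<in> Dset d mu" and x: "\<not> is_cut (cuts mu) x"
  shows "inv h x < inv h (x + 1)"
proof -
  have hW: "h \<in> W" using h unfolding Dset_def by simp
  have "nat (gap_index x) \<in> Jset d mu"
    using x gap_index_range[of x] unfolding is_cut_def Jset_def cuts_def by auto
  thus ?thesis using Dset_no_simple_descent[OF h] W_ascent_if_no_simple_descent_at_gap[OF W_inv[OF hW]] by blast
qed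

end

locale composition = affine_weyl +
  fixes r :: nat and lam :: "nat list"
  assumes lam_in_Lam: "lam \<in> Lam r d"
begin

abbreviation nn :: int where "nn \<equiv> 2 * int r + 2"

definition ps :: "nat \<Rightarrow> int" where "ps j = int (psum lam j)"

text \<open>The blocks repeat with index period \<open>nn\<close> (the paper's \<open>n\<close>) and spatial period \<open>D\<close>:
  \<open>bdry0\<close> lists the right ends of \<open>R\<^sub>0, \<dots>, R\<^sub>2\<^sub>r\<^sub>+\<^sub>1\<close> within \<open>[0, D)\<close>, and \<open>bdry i\<close> is the
  largest element of \<open>R\<^sub>i\<close> (see \<open>Rset_eq_bdry\<close>).\<close>

definition bdry0 :: "nat \<Rightarrow> int" where
  "bdry0 m = (if m \<le> r then ps m else D - 1 - ps (2 * r + 1 - m))"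

definition bdry :: "int \<Rightarrow> int" where
  "bdry i = (i div nn) * D + bdry0 (nat (i mod nn))"

lemma lam_length: "length lam = r + 2" and lam_sum: "sum_list lam = d"
  using lam_in_Lam unfolding Lam_def by auto

lemma ps_mono: "j \<le> j' \<Longrightarrow> ps j \<le> ps j'"
  unfolding ps_def psum_def using sum_list_take_mono by simp

lemma ps_last: "ps (r + 1) = int d"
  unfolding ps_def psum_def using lam_length lam_sum by simp

lemma ps_le: "ps j \<le> int d"
proof -
  have "ps j \<le> ps (max j (r + 1))" by (rule ps_mono) simp
  also have "\<dots> = int d" unfolding ps_def psum_def using lam_length lam_sum by (simp add: max_def)
  finally show ?thesis .
qed

lemma ps_ge: "0 \<le> ps j" unfolding ps_def by simp

lemma ps_Suc: "j + 1 < length lam \<Longrightarrow> ps (j + 1) = ps j + int (lam ! (j + 1))"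
  unfolding ps_def psum_def by (simp add: take_Suc_conv_app_nth)

lemma ps_0: "ps 0 = int (lam ! 0)"
  unfolding ps_def psum_def using lam_length by (cases lam) auto

lemma ps_r: "ps r = int d - int (lam ! (r + 1))"
  using ps_Suc[of r] ps_last lam_length by simp

lemma bdry0_range: "m \<le> 2 * r + 1 \<Longrightarrow> 0 \<le> bdry0 m \<and> bdry0 m < D"
  unfolding bdry0_def using ps_le[of m] ps_ge[of m] ps_le[of "2 * r + 1 - m"] ps_ge[of "2 * r + 1 - m"] D_eq by auto

lemma bdry0_mono: "m < 2 * r + 1 \<Longrightarrow> bdry0 m \<le> bdry0 (m + 1)"
proof -
  assume m: "m < 2 * r + 1"
  consider "m < r" | "m = r" | "r < m" by linarith
  thus ?thesis
  proof cases
    case 1 thus ?thesis unfolding bdry0_def using ps_mono[of m "m + 1"] by simp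
  next
    case 2 thus ?thesis unfolding bdry0_def using ps_le[of r] D_eq by simp
  next
    case 3
    hence "2 * r + 1 - (m + 1) \<le> 2 * r + 1 - m" by simp
    thus ?thesis unfolding bdry0_def using 3 ps_mono by simp
  qed
qed

lemma nn_pos: "0 < nn" by simp

lemma bdry_step: "bdry i \<le> bdry (i + 1)"
proof -
  define q where "q = i div nn"
  define m where "m = i mod nn"
  have i: "i = q * nn + m" "0 \<le> m" "m < nn" unfolding q_def m_def using div_mult_mod_eq[of i nn] by simp_all
  show ?thesis
  proof (cases "m < nn - 1")
    case True
    have "(i + 1) div nn = q" "(i + 1) mod nn = m + 1" using int_div_mod_eqI[OF nn_pos, of "m + 1" "i + 1" q] i True by auto
    moreover have "bdry0 (nat m) \<le> bdry0 (nat m + 1)" using bdry0_mono[of "nat m"] True i by simp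
    moreover have "nat (m + 1) = nat m + 1" using i by simp
    ultimately show ?thesis unfolding bdry_def q_def[symmetric] m_def[symmetric] by simp
  next
    case False
    hence m: "m = nn - 1" using i by simp
    have "(i + 1) div nn = q + 1" "(i + 1) mod nn = 0" using int_div_mod_eqI[OF nn_pos, of 0 "i + 1" "q + 1"] i m
      by (auto simp: algebra_simps)
    moreover have "nat m = 2 * r + 1" using m by simp
    moreover have "bdry0 (2 * r + 1) = D - 1 - ps 0" unfolding bdry0_def by simp
    moreover have "bdry0 0 = ps 0" unfolding bdry0_def by simp
    ultimately show ?thesis unfolding bdry_def q_def[symmetric] m_def[symmetric] using ps_ge[of 0]
      by (simp add: algebra_simps)
  qed
qed

lemma bdry_mono: "i \<le> j \<Longrightarrow> bdry i \<le> bdry j"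
  using int_step_mono_on[of i j bdry i j, OF bdry_step] by simp

lemma bdry_shiftk: "bdry (i + k * nn) = bdry i + k * D"
proof -
  have "(i + k * nn) div nn = i div nn + k" "(i + k * nn) mod nn = i mod nn" by simp_all
  thus ?thesis unfolding bdry_def by (simp add: algebra_simps)
qed

lemma bdry_neg: "bdry (- i - 1) = - bdry i - 1"
proof -
  define q where "q = i div nn"
  define m where "m = i mod nn"
  have i: "i = q * nn + m" "0 \<le> m" "m < nn" unfolding q_def m_def using div_mult_mod_eq[of i nn] by simp_all
  have "- i - 1 = (- q - 1) * nn + (nn - 1 - m)" using i by (simp add: algebra_simps)
  hence dm: "(- i - 1) div nn = - q - 1" "(- i - 1) mod nn = nn - 1 - m"
    using int_div_mod_eqI[OF nn_pos, of "nn - 1 - m" "- i - 1" "- q - 1"] i by auto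
  have n: "nat (nn - 1 - m) = 2 * r + 1 - nat m" using i by simp
  have "bdry0 (2 * r + 1 - nat m) = D - 1 - bdry0 (nat m)"
  proof (cases "nat m \<le> r")
    case True
    hence "\<not> 2 * r + 1 - nat m \<le> r" by simp
    moreover have "2 * r + 1 - (2 * r + 1 - nat m) = nat m" using True by simp
    ultimately show ?thesis unfolding bdry0_def using True by simp
  next
    case False
    hence "2 * r + 1 - nat m \<le> r" using i by simp
    thus ?thesis unfolding bdry0_def using False by simp
  qed
  thus ?thesis unfolding bdry_def dm n q_def[symmetric] m_def[symmetric] by (simp add: algebra_simps)
qed

lemma bdry_small: "j \<le> r \<Longrightarrow> bdry (int j) = ps j"
proof -
  assume j: "j \<le> r"
  have "int j div nn = 0" "int j mod nn = int j" using j by (simp_all add: div_pos_pos_trivial mod_pos_pos_trivial)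
  thus ?thesis unfolding bdry_def bdry0_def using j by simp
qed

lemma bdry_r_plus_1: "bdry (int r + 1) = D - 1 - ps r"
proof -
  have "(int r + 1) div nn = 0" "(int r + 1) mod nn = int r + 1" by (simp_all add: div_pos_pos_trivial mod_pos_pos_trivial)
  moreover have "nat (int r + 1) = r + 1" by simp
  ultimately show ?thesis unfolding bdry_def bdry0_def by simp
qed

lemma bdry_minus_1: "bdry (- 1) = - ps 0 - 1"
  using bdry_neg[of 0] bdry_small[of 0] by simp

lemma bdry_bracket_exists: "\<exists>i. bdry (i - 1) < x \<and> x \<le> bdry i"
proof -
  define q where "q = x div D"
  have x: "q * D \<le> x" "x < q * D + D" unfolding q_def using D_pos
    by (metis div_mod_decomp_int le_add_same_cancel1 pos_mod_sign) (metis D_pos add_less_cancel_left div_mod_decomp_int mult.commute pos_mod_bound q_def)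
  have "bdry (0 + (q - 1) * nn) = bdry 0 + (q - 1) * D" by (rule bdry_shiftk)
  hence lo: "bdry ((q - 1) * nn) < x" using bdry_small[of 0] ps_le[of 0] D_eq x by (simp add: algebra_simps)
  have "bdry (0 + (q + 1) * nn) = bdry 0 + (q + 1) * D" by (rule bdry_shiftk)
  hence hi: "x - 1 < bdry ((q + 1) * nn)" using bdry_small[of 0] ps_ge[of 0] x by (simp add: algebra_simps)
  have "(q - 1) * nn < (q + 1) * nn" by (simp add: algebra_simps)
  then obtain i where "bdry (i - 1) \<le> x - 1" "x - 1 < bdry i"
    using int_step_crossing[of bdry "(q - 1) * nn" "x - 1" "(q + 1) * nn"] lo hi by auto
  thus ?thesis by (intro exI[of _ i]) auto
qed

lemma bdry_prev:
  assumes "1 \<le> i mod nn"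
  shows "bdry (i - 1) = (i div nn) * D + bdry0 (nat (i mod nn) - 1)"
proof -
  have i: "i = (i div nn) * nn + i mod nn" "i mod nn < nn" using div_mult_mod_eq[of i nn] by simp_all
  have "i - 1 = (i div nn) * nn + (i mod nn - 1)" using i by linarith
  hence "(i - 1) div nn = i div nn" "(i - 1) mod nn = i mod nn - 1"
    using int_div_mod_eqI[OF nn_pos, of "i mod nn - 1" "i - 1" "i div nn"] assms i by auto
  moreover have "nat (i mod nn - 1) = nat (i mod nn) - 1" using assms by simp
  ultimately show ?thesis unfolding bdry_def by simp
qed

lemma bdry_prev0:
  assumes "i mod nn = 0"
  shows "bdry (i - 1) = (i div nn) * D - 1 - ps 0"
proof -
  have i: "i = (i div nn) * nn" using div_mult_mod_eq[of i nn] assms by simp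
  have "i - 1 = (i div nn - 1) * nn + (nn - 1)" using i by (simp add: algebra_simps)
  hence "(i - 1) div nn = i div nn - 1" "(i - 1) mod nn = nn - 1"
    using int_div_mod_eqI[OF nn_pos, of "nn - 1" "i - 1" "i div nn - 1"] by auto
  moreover have "nat (nn - 1) = 2 * r + 1" by simp
  moreover have "bdry0 (2 * r + 1) = D - 1 - ps 0" unfolding bdry0_def by simp
  ultimately have "bdry (i - 1) = (i div nn - 1) * D + (D - 1 - ps 0)" unfolding bdry_def by simp
  moreover have "(i div nn - 1) * D = i div nn * D - D" by (simp add: left_diff_distrib)
  ultimately show ?thesis by linarith
qed

lemma Rset_eq_bdry_translated:
  assumes "i mod nn \<le> int r + 1"
  shows "Rset d lam i = {x. bdry (i - 1) < x \<and> x \<le> bdry i}"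
proof -
  define q where "q = i div nn"
  define m where "m = i mod nn"
  have m: "0 \<le> m" "m < nn" unfolding m_def by simp_all
  have rr: "length lam - 2 = r" using lam_length by simp
  have R: "Rset d lam i = (if m \<le> int r + 1 then (\<lambda>x. x + q * D) ` Rbase d lam (nat m)
       else (\<lambda>x. (q + 1) * D - x) ` Rbase d lam (nat (nn - m)))"
    unfolding Rset_def Let_def rr q_def m_def by simp
  have Ei: "bdry i = q * D + bdry0 (nat m)" unfolding bdry_def q_def m_def by simp
  consider "m = 0" | "1 \<le> m" "m \<le> int r" | "m = int r + 1" using m assms unfolding m_def by linarith
  thus ?thesis
  proof cases
    case 1
    have E1: "bdry (i - 1) = q * D - 1 - ps 0" using bdry_prev0 1 unfolding q_def m_def by simp
    have "Rbase d lam (nat m) = {- int (lam ! 0) .. int (lam ! 0)}"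
      unfolding Rbase_def Let_def rr using 1 by simp
    hence "Rset d lam i = (\<lambda>x. x + q * D) ` {- int (lam ! 0) .. int (lam ! 0)}"
      using R 1 by simp
    also have "\<dots> = {x. bdry (i - 1) < x \<and> x \<le> bdry i}"
      unfolding image_plus_const_int Ei E1 using 1 ps_0 unfolding bdry0_def by auto
    finally show ?thesis .
  next
    case 2
    have "nat m - 1 \<le> r" using 2 by simp
    hence E1: "bdry (i - 1) = q * D + ps (nat m - 1)" using bdry_prev[of i] 2 unfolding q_def m_def bdry0_def by simp
    have "Rbase d lam (nat m) = {int (psum lam (nat m - 1)) <.. int (psum lam (nat m))}"
      unfolding Rbase_def Let_def rr using 2 by auto
    hence "Rset d lam i = (\<lambda>x. x + q * D) ` {int (psum lam (nat m - 1)) <.. int (psum lam (nat m))}"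
      using R 2 by simp
    also have "\<dots> = {x. bdry (i - 1) < x \<and> x \<le> bdry i}"
      unfolding image_plus_const_int Ei E1 using 2 unfolding bdry0_def ps_def by auto
    finally show ?thesis .
  next
    case 3
    have n: "nat m = r + 1" using 3 by simp
    have "bdry (i - 1) = q * D + bdry0 (nat m - 1)" using bdry_prev[of i] 3 unfolding q_def m_def by simp
    hence E1: "bdry (i - 1) = q * D + ps r" using n unfolding bdry0_def by simp
    have "Rbase d lam (nat m) = {int d + 1 - int (lam ! (r + 1)) .. int d + 1 + int (lam ! (r + 1))}"
      unfolding Rbase_def Let_def rr n by simp
    hence "Rset d lam i = (\<lambda>x. x + q * D) ` {int d + 1 - int (lam ! (r + 1)) .. int d + 1 + int (lam ! (r + 1))}"
      using R 3 by simp
    also have "\<dots> = {x. bdry (i - 1) < x \<and> x \<le> bdry i}"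
      unfolding image_plus_const_int Ei E1 n using ps_r D_eq unfolding bdry0_def by auto
    finally show ?thesis .
  qed
qed

lemma Rset_eq_bdry_reflected:
  assumes "int r + 2 \<le> i mod nn"
  shows "Rset d lam i = {x. bdry (i - 1) < x \<and> x \<le> bdry i}"
proof -
  define q where "q = i div nn"
  define m where "m = i mod nn"
  have m: "0 \<le> m" "m < nn" unfolding m_def by simp_all
  have rr: "length lam - 2 = r" using lam_length by simp
  have R: "Rset d lam i = (if m \<le> int r + 1 then (\<lambda>x. x + q * D) ` Rbase d lam (nat m)
       else (\<lambda>x. (q + 1) * D - x) ` Rbase d lam (nat (nn - m)))"
    unfolding Rset_def Let_def rr q_def m_def by simp
  have Ei: "bdry i = q * D + bdry0 (nat m)" unfolding bdry_def q_def m_def by simp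
  have m_ge: "int r + 2 \<le> m" using assms unfolding m_def .
  define j where "j = nat (nn - m)"
  have j: "1 \<le> j" "j \<le> r" "int j = nn - m" unfolding j_def using m_ge m by auto
  have E1: "bdry (i - 1) = q * D + D - 1 - ps j"
  proof -
    have "bdry (i - 1) = q * D + bdry0 (nat m - 1)" using bdry_prev[of i] m_ge unfolding q_def m_def by simp
    moreover have "\<not> nat m - 1 \<le> r" "2 * r + 1 - (nat m - 1) = j" using m_ge j by auto
    ultimately show ?thesis unfolding bdry0_def by simp
  qed
  have E2: "bdry i = q * D + D - 1 - ps (j - 1)"
  proof -
    have "\<not> nat m \<le> r" "2 * r + 1 - nat m = j - 1" using m_ge j by auto
    thus ?thesis using Ei unfolding bdry0_def by simp
  qed
  have "Rbase d lam j = {int (psum lam (j - 1)) <.. int (psum lam j)}"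
    unfolding Rbase_def Let_def rr using j by auto
  hence "Rset d lam i = (\<lambda>x. (q + 1) * D - x) ` {int (psum lam (j - 1)) <.. int (psum lam j)}"
    using R m_ge unfolding j_def by simp
  also have "\<dots> = {x. bdry (i - 1) < x \<and> x \<le> bdry i}"
    unfolding image_minus_from_int E1 E2 unfolding ps_def by (auto simp: algebra_simps)
  finally show ?thesis .
qed

lemma Rset_eq_bdry: "Rset d lam i = {x. bdry (i - 1) < x \<and> x \<le> bdry i}"
  using Rset_eq_bdry_translated Rset_eq_bdry_reflected by (cases "i mod nn \<le> int r + 1") auto

lemma cuts_eq: "cuts lam = {psum lam j | j. j \<le> r}"
  unfolding cuts_def using lam_length by simp

lemma bdry_is_cut: "is_cut (cuts lam) (bdry i)"
proof -
  define x where "x = bdry i"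
  define q where "q = i div nn"
  define m where "m = nat (i mod nn)"
  have "i mod nn < nn" by simp
  hence m: "m \<le> 2 * r + 1" unfolding m_def by linarith
  have xe: "x = bdry0 m + q * D" unfolding x_def bdry_def q_def m_def by simp
  have "x mod D = bdry0 m" using bdry0_range[OF m] xe by (simp add: mod_pos_pos_trivial)
  show ?thesis
  proof (cases "m \<le> r")
    case True
    hence "gap_index x = ps m" unfolding gap_index_def using \<open>x mod D = bdry0 m\<close> ps_le unfolding bdry0_def by simp
    thus ?thesis unfolding x_def[symmetric] is_cut_def cuts_eq ps_def using True by auto
  next
    case False
    hence "bdry0 m = D - 1 - ps (2 * r + 1 - m)" unfolding bdry0_def by simp
    hence "gap_index x = ps (2 * r + 1 - m)" unfolding gap_index_def using \<open>x mod D = bdry0 m\<close> ps_le[of "2 * r + 1 - m"] D_eq by simp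
    thus ?thesis unfolding x_def[symmetric] is_cut_def cuts_eq ps_def using False by auto
  qed
qed

lemma is_cut_imp_bdry:
  assumes "is_cut (cuts lam) x"
  shows "\<exists>i. x = bdry i"
proof -
  obtain j where j: "j \<le> r" "nat (gap_index x) = psum lam j" using assms unfolding is_cut_def cuts_eq by auto
  have cj: "gap_index x = ps j" using j(2) gap_index_range[of x] unfolding ps_def by linarith
  define q where "q = x div D"
  have xq: "x = q * D + x mod D" unfolding q_def by simp
  show ?thesis
  proof (cases "x mod D \<le> int d")
    case True
    hence "x mod D = ps j" using cj unfolding gap_index_def by simp
    moreover have "bdry (int j + q * nn) = bdry (int j) + q * D" by (rule bdry_shiftk)
    ultimately show ?thesis using bdry_small[OF j(1)] xq by (intro exI[of _ "int j + q * nn"]) simp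
  next
    case False
    hence "x mod D = D - 1 - ps j" using cj unfolding gap_index_def by simp
    moreover obtain t where t: "t = 2 * r + 1 - j" by blast
    have tt: "t \<le> 2 * r + 1" "\<not> t \<le> r" "2 * r + 1 - t = j" using t j by auto
    have "bdry (int t + q * nn) = bdry (int t) + q * D" by (rule bdry_shiftk)
    moreover have "bdry (int t) = D - 1 - ps j"
    proof -
      have "int t div nn = 0" "int t mod nn = int t"
        using tt by (simp_all add: div_pos_pos_trivial mod_pos_pos_trivial)
      thus ?thesis unfolding bdry_def bdry0_def using tt by simp
    qed
    ultimately show ?thesis using xq by (intro exI[of _ "int t + q * nn"]) simp
  qed
qed

lemma is_cut_iff_bdry: "is_cut (cuts lam) x \<longleftrightarrow> (\<exists>i. x = bdry i)"
  using bdry_is_cut is_cut_imp_bdry by blast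

end

locale kappa_setting = affine_weyl +
  fixes r :: nat and lam mu :: "nat list" and g :: "int \<Rightarrow> int" and k :: "nat \<Rightarrow> nat"
  assumes lam_in_Lam: "lam \<in> Lam r d" and mu_in_Lam: "mu \<in> Lam r d"
    and g_in_Dlm: "g \<in> Dlm d lam mu" and k_valid: "kvalid r (kappa d lam g mu) k"

sublocale kappa_setting \<subseteq> L: composition d r lam
  by (unfold_locales) (rule lam_in_Lam)

sublocale kappa_setting \<subseteq> M: composition d r mu
  by (unfold_locales) (rule mu_in_Lam)

context kappa_setting begin

abbreviation A :: "int \<Rightarrow> int \<Rightarrow> nat" where "A \<equiv> kappa d lam g mu"

lemma g_in_W_inv_in_Dset: "g \<in> W" "inv g \<in> Dset d mu"
proof -
  obtain h where h: "h \<in> Dset d mu" "g = inv h" using g_in_Dlm unfolding Dlm_def by auto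
  have hW: "h \<in> W" using h(1) unfolding Dset_def by simp
  show "g \<in> W" using h(2) W_inv[OF hW] by simp
  have "inv g = h" using h(2) W_bij[OF hW] by (simp add: inv_inv_eq)
  thus "inv g \<in> Dset d mu" using h(1) by simp
qed

lemma g_in_W: "g \<in> W" by (rule g_in_W_inv_in_Dset(1))

lemma g_inv_inv: "inv (inv g) = g" using W_bij[OF g_in_W] by (simp add: inv_inv_eq)

lemma g_ascent: "\<not> is_cut (cuts mu) x \<Longrightarrow> g x < g (x + 1)"
  using Dset_inv_ascent[OF g_in_W_inv_in_Dset(2)] g_inv_inv by simp

lemma mu_block_no_cut: "M.bdry (j - 1) < x \<Longrightarrow> x < M.bdry j \<Longrightarrow> \<not> is_cut (cuts mu) x"
proof
  assume a: "M.bdry (j - 1) < x" "x < M.bdry j" "is_cut (cuts mu) x"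
  then obtain i where i: "x = M.bdry i" using M.is_cut_iff_bdry by blast
  show False
  proof (cases "i \<le> j - 1")
    case True thus False using M.bdry_mono[OF True] a i by simp
  next
    case False
    hence "j \<le> i" by simp
    thus False using M.bdry_mono[of j i] a i by simp
  qed
qed

lemma g_ascent_in_block: "M.bdry (j - 1) < x \<Longrightarrow> x + 1 \<le> M.bdry j \<Longrightarrow> g x < g (x + 1)"
  using mu_block_no_cut g_ascent by simp

lemma g_mono_on_block: assumes "M.bdry (j - 1) < y" "y \<le> y'" "y' \<le> M.bdry j" shows "g y \<le> g y'"
proof (rule int_step_mono_on[of "M.bdry (j - 1) + 1" "M.bdry j" g y y'])
  fix x assume "M.bdry (j - 1) + 1 \<le> x" "x < M.bdry j" thus "g x \<le> g (x + 1)" using g_ascent_in_block[of j x] by simp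
qed (use assms in auto)

lemma g_strict_mono_on_block: assumes "M.bdry (j - 1) < y" "y < y'" "y' \<le> M.bdry j" shows "g y < g y'"
proof (rule int_step_strict_mono_on[of "M.bdry (j - 1) + 1" "M.bdry j" g y y'])
  fix x assume "M.bdry (j - 1) + 1 \<le> x" "x < M.bdry j" thus "g x < g (x + 1)" using g_ascent_in_block[of j x] by simp
qed (use assms in auto)

lemma kappa_eq_card: "A i j = card {y. M.bdry (j - 1) < y \<and> y \<le> M.bdry j \<and> L.bdry (i - 1) < g y \<and> g y \<le> L.bdry i}"
proof -
  have 1: "Rset d lam i \<inter> g ` Rset d mu j = g ` {y \<in> Rset d mu j. g y \<in> Rset d lam i}" by blast
  have 2: "{y \<in> Rset d mu j. g y \<in> Rset d lam i} = {y. M.bdry (j - 1) < y \<and> y \<le> M.bdry j \<and> L.bdry (i - 1) < g y \<and> g y \<le> L.bdry i}"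
    unfolding L.Rset_eq_bdry M.Rset_eq_bdry by simp
  have "inj_on g X" for X by (rule inj_on_subset[OF W_inj[OF g_in_W] subset_UNIV])
  hence "card (g ` {y \<in> Rset d mu j. g y \<in> Rset d lam i}) = card {y \<in> Rset d mu j. g y \<in> Rset d lam i}"
    by (rule card_image)
  thus ?thesis unfolding kappa_def 1 2 .
qed

lemma row_within_band:
  assumes j: "j \<le> r + 1" and y: "M.bdry (int j - 1) < y" "y \<le> M.bdry (int j)"
  shows "\<exists>i. L.bdry (i - 1) < g y \<and> g y \<le> L.bdry i \<and> \<bar>i - int j\<bar> \<le> int (k j)"
proof -
  obtain i where i: "L.bdry (i - 1) < g y" "g y \<le> L.bdry i" using L.bdry_bracket_exists by blast
  have fin: "finite {y. M.bdry (int j - 1) < y \<and> y \<le> M.bdry (int j) \<and> L.bdry (i - 1) < g y \<and> g y \<le> L.bdry i}"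
    by (rule finite_subset[of _ "{M.bdry (int j - 1)<..M.bdry (int j)}"]) auto
  have "A i (int j) \<noteq> 0" unfolding kappa_eq_card using fin y i by (auto simp: card_eq_0_iff)
  hence "\<bar>i - int j\<bar> \<le> int (k j)" using k_valid j unfolding kvalid_def by blast
  thus ?thesis using i by blast
qed

definition jumps_cut :: "int \<Rightarrow> bool" where "jumps_cut x \<longleftrightarrow> (\<exists>i. g x \<le> L.bdry i \<and> L.bdry i < g (x + 1))"

lemma M_bdry_small: "j \<le> r \<Longrightarrow> M.bdry (int j) = M.ps j" by (rule M.bdry_small)
lemma M_bdry_small_pred: "1 \<le> j \<Longrightarrow> j \<le> r \<Longrightarrow> M.bdry (int j - 1) = M.ps (j - 1)"
  using M.bdry_small[of "j - 1"] by (simp add: of_nat_diff)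

lemma column_mid:
  assumes j: "1 \<le> j" "j \<le> r"
  shows "sum_list (map (\<lambda>i. A i (int j)) [int j - int (k j) .. int j + int (k j)]) = psum mu j - psum mu (j - 1)"
    and "\<And>c. M.ps (j - 1) < c \<Longrightarrow> c < M.ps j \<Longrightarrow>
      (nat c \<in> psums (psum mu (j - 1)) (map (\<lambda>i. A i (int j)) [int j - int (k j) .. int j + int (k j)]) \<longleftrightarrow> jumps_cut c)"
proof -
  define s0 where "s0 = M.ps (j - 1)"
  define s1 where "s1 = M.ps j"
  have e0: "M.bdry (int j - 1) = s0" unfolding s0_def using M_bdry_small_pred[OF j] .
  have e1: "M.bdry (int j) = s1" unfolding s1_def using M_bdry_small[OF j(2)] .
  have s: "0 \<le> s0" "s0 \<le> s1" unfolding s0_def s1_def using M.ps_ge M.ps_mono[of "j - 1" j] by auto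
  have ginc: "g x < g (x + 1)" if "s0 < x" "x < s1" for x
    using g_ascent_in_block[of "int j" x] that e0 e1 by simp
  have bnd: "L.bdry (int j - int (k j) - 1) < g y \<and> g y \<le> L.bdry (int j + int (k j))" if "s0 < y" "y \<le> s1" for y
  proof -
    have yy: "M.bdry (int j - 1) < y" "y \<le> M.bdry (int j)" using that e0 e1 by simp_all
    have jr: "j \<le> r + 1" using j by simp
    obtain i where i: "L.bdry (i - 1) < g y" "g y \<le> L.bdry i" "\<bar>i - int j\<bar> \<le> int (k j)"
      using row_within_band[OF jr yy] by blast
    have "L.bdry (int j - int (k j) - 1) \<le> L.bdry (i - 1)" using i(3) by (intro L.bdry_mono) simp
    moreover have "L.bdry i \<le> L.bdry (int j + int (k j))" using i(3) by (intro L.bdry_mono) simp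
    ultimately show ?thesis using i by simp
  qed
  have Feq: "map (\<lambda>i. A i (int j)) [int j - int (k j) .. int j + int (k j)]
      = map (\<lambda>i. card {y. s0 < y \<and> y \<le> s1 \<and> L.bdry (i - 1) < g y \<and> g y \<le> L.bdry i}) [int j - int (k j) .. int j + int (k j)]"
    unfolding kappa_eq_card e0 e1 ..
  note sm = monotone_block_counts[of "L.bdry" s0 s1 g "int j - int (k j)" "int j + int (k j)", OF L.bdry_mono s ginc _ bnd]
  have "sum_list (map (\<lambda>i. A i (int j)) [int j - int (k j) .. int j + int (k j)]) = nat (s1 - s0)"
    unfolding Feq using sm(1) by simp
  also have "\<dots> = psum mu j - psum mu (j - 1)" unfolding s0_def s1_def M.ps_def by simp
  finally show "sum_list (map (\<lambda>i. A i (int j)) [int j - int (k j) .. int j + int (k j)]) = psum mu j - psum mu (j - 1)" .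
  fix c assume c: "M.ps (j - 1) < c" "c < M.ps j"
  have "nat s0 = psum mu (j - 1)" unfolding s0_def M.ps_def by simp
  thus "nat c \<in> psums (psum mu (j - 1)) (map (\<lambda>i. A i (int j)) [int j - int (k j) .. int j + int (k j)]) \<longleftrightarrow> jumps_cut c"
    unfolding Feq jumps_cut_def using sm(2)[of c] c s0_def s1_def by simp
qed

lemma g_zero: "g 0 = 0" using W_zero[OF g_in_W] .
lemma g_odd: "g (- y) = - g y" using W_odd[OF g_in_W] .

lemma g_pos_first_block: "0 < y \<Longrightarrow> y \<le> M.ps 0 \<Longrightarrow> 0 < g y"
  using g_strict_mono_on_block[of 0 0 y] M.bdry_minus_1 M.bdry_small[of 0] M.ps_ge[of 0] g_zero by simp

lemma g_nonpos_first_block: "- M.ps 0 - 1 < y \<Longrightarrow> y \<le> 0 \<Longrightarrow> g y \<le> 0"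
  using g_mono_on_block[of 0 y 0] M.bdry_minus_1 M.bdry_small[of 0] g_zero by simp

lemma kappa_first_column:
  assumes i: "1 \<le> i"
  shows "A i 0 = card {y. 0 < y \<and> y \<le> M.ps 0 \<and> L.bdry (i - 1) < g y \<and> g y \<le> L.bdry i}"
proof -
  have "0 \<le> L.bdry (i - 1)" using L.bdry_mono[of 0 "i - 1"] L.bdry_small[of 0] L.ps_ge[of 0] i by simp
  hence "0 < y" if "- M.ps 0 - 1 < y" "L.bdry (i - 1) < g y" for y
    using g_nonpos_first_block[OF that(1)] that(2) by fastforce
  hence "{y. M.bdry (0 - 1) < y \<and> y \<le> M.bdry 0 \<and> L.bdry (i - 1) < g y \<and> g y \<le> L.bdry i}
      = {y. 0 < y \<and> y \<le> M.ps 0 \<and> L.bdry (i - 1) < g y \<and> g y \<le> L.bdry i}"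
    using M.bdry_minus_1 M.bdry_small[of 0] M.ps_ge[of 0] by auto
  thus ?thesis unfolding kappa_eq_card by simp
qed

text \<open>The corner entry is odd: its block is symmetric under \<open>y \<mapsto> -y\<close> around the fixed point 0.\<close>

lemma kappa_first_corner: "A 0 0 = 1 + 2 * card {y. 0 < y \<and> y \<le> M.ps 0 \<and> g y \<le> L.ps 0}"
proof -
  define m where "m = M.ps 0"
  define a where "a = L.ps 0"
  have m0: "0 \<le> m" "0 \<le> a" unfolding m_def a_def using M.ps_ge L.ps_ge by auto
  have ME: "M.bdry (0 - 1) = - m - 1" "M.bdry 0 = m" unfolding m_def using M.bdry_minus_1 M.bdry_small[of 0] by simp_all
  have LE: "L.bdry (0 - 1) = - a - 1" "L.bdry 0 = a" unfolding a_def using L.bdry_minus_1 L.bdry_small[of 0] by simp_all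
  define T where "T = {y. 0 < y \<and> y \<le> m \<and> L.bdry (0 - 1) < g y \<and> g y \<le> L.bdry 0}"
  have fin: "finite T" unfolding T_def by (rule finite_subset[of _ "{0<..m}"]) auto
  have T_eq: "T = {y. 0 < y \<and> y \<le> m \<and> g y \<le> a}"
    unfolding T_def using g_pos_first_block LE m0 unfolding m_def by force
  have "y \<in> {y. M.bdry (0 - 1) < y \<and> y \<le> M.bdry 0 \<and> L.bdry (0 - 1) < g y \<and> g y \<le> L.bdry 0}
      \<longleftrightarrow> y = 0 \<or> y \<in> T \<or> - y \<in> T" for y
    unfolding T_def using ME LE g_zero g_odd[of y] m0 by auto
  moreover have "y \<in> insert 0 (T \<union> (\<lambda>y. 2 * 0 - y) ` T) \<longleftrightarrow> y = 0 \<or> y \<in> T \<or> - y \<in> T" for y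
    by (auto simp: image_iff) (metis minus_minus)
  ultimately have "{y. M.bdry (0 - 1) < y \<and> y \<le> M.bdry 0 \<and> L.bdry (0 - 1) < g y \<and> g y \<le> L.bdry 0}
      = insert 0 (T \<union> (\<lambda>y. 2 * 0 - y) ` T)" by blast
  moreover have "card (insert 0 (T \<union> (\<lambda>y. 2 * 0 - y) ` T)) = 1 + 2 * card T"
    using fin unfolding T_def by (intro card_insert_reflected disjI1) auto
  ultimately show ?thesis unfolding kappa_eq_card T_eq m_def a_def by simp
qed

lemma first_corner_zero_iff:
  assumes mp: "0 < M.ps 0"
  shows "(A 0 0 - 1) div 2 = 0 \<longleftrightarrow> jumps_cut 0"
proof -
  define T where "T = {y. 0 < y \<and> y \<le> M.ps 0 \<and> g y \<le> L.ps 0}"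
  have fin: "finite T" unfolding T_def by (rule finite_subset[of _ "{0<..M.ps 0}"]) auto
  have half: "(A 0 0 - 1) div 2 = card T" unfolding T_def kappa_first_corner by simp
  have L0: "L.bdry (0 - 1) = - L.ps 0 - 1" "L.bdry 0 = L.ps 0" using L.bdry_minus_1 L.bdry_small[of 0] by simp_all
  show ?thesis
  proof
    assume "(A 0 0 - 1) div 2 = 0"
    hence "T = {}" using half fin by simp
    hence "\<not> g 1 \<le> L.ps 0" using mp unfolding T_def by auto
    thus "jumps_cut 0" unfolding jumps_cut_def using g_zero L0 L.ps_ge[of 0] by (intro exI[of _ 0]) simp
  next
    assume "jumps_cut 0"
    then obtain i where i: "0 \<le> L.bdry i" "L.bdry i < g 1" unfolding jumps_cut_def using g_zero by auto
    have "\<not> i \<le> 0 - 1" using L.bdry_mono[of i "0 - 1"] i L0 L.ps_ge[of 0] by auto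
    hence ai: "L.ps 0 \<le> L.bdry i" using L.bdry_mono[of 0 i] L0 by simp
    have "g 1 \<le> g y" if "0 < y" "y \<le> M.ps 0" for y
      using g_mono_on_block[of 0 1 y] M.bdry_minus_1 M.bdry_small[of 0] that by simp
    hence "T = {}" using i ai unfolding T_def by fastforce
    thus "(A 0 0 - 1) div 2 = 0" using half by simp
  qed
qed

lemma column_first:
  shows "(A 0 0 - 1) div 2 + sum_list (map (\<lambda>i. A (int i) 0) [1..<k 0 + 1]) = psum mu 0"
    and "\<And>c. 0 < c \<Longrightarrow> c < M.ps 0 \<Longrightarrow>
      (nat c \<in> psums ((A 0 0 - 1) div 2) (map (\<lambda>i. A (int i) 0) [1..<k 0 + 1]) \<longleftrightarrow> jumps_cut c)"
proof -
  define m where "m = M.ps 0"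
  define F0 where "F0 = (\<lambda>i. card {y. 0 < y \<and> y \<le> m \<and> L.bdry (i - 1) < g y \<and> g y \<le> L.bdry i})"
  define col where "col = map (\<lambda>i. A (int i) 0) [1..<k 0 + 1]"
  have m0: "0 \<le> m" unfolding m_def using M.ps_ge by auto
  have ME: "M.bdry (0 - 1) = - m - 1" "M.bdry 0 = m" unfolding m_def using M.bdry_minus_1 M.bdry_small[of 0] by simp_all
  have L0: "L.bdry (0 - 1) = - L.ps 0 - 1" "L.bdry 0 = L.ps 0" using L.bdry_minus_1 L.bdry_small[of 0] by simp_all
  have ginc: "g x < g (x + 1)" if "0 < x" "x < m" for x using g_ascent_in_block[of 0 x] ME that by simp
  have bnd: "L.bdry (0 - 1) < g y \<and> g y \<le> L.bdry (int (k 0))" if "0 < y" "y \<le> m" for y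
  proof -
    have yy: "M.bdry (int 0 - 1) < y" "y \<le> M.bdry (int 0)" using that ME by simp_all
    obtain i where i: "L.bdry (i - 1) < g y" "g y \<le> L.bdry i" "\<bar>i - int 0\<bar> \<le> int (k 0)"
      using row_within_band[OF _ yy] by blast
    have "L.bdry i \<le> L.bdry (int (k 0))" using i(3) by (intro L.bdry_mono) simp
    thus ?thesis using i g_pos_first_block[OF that[unfolded m_def]] L0 L.ps_ge[of 0] by simp
  qed
  have "F0 0 = card {y. 0 < y \<and> y \<le> M.ps 0 \<and> g y \<le> L.ps 0}"
    unfolding F0_def m_def L0 using g_pos_first_block L.ps_ge[of 0]
    by (intro arg_cong[where f=card]) fastforce
  hence F00: "F0 0 = (A 0 0 - 1) div 2" unfolding kappa_first_corner by simp
  have "map F0 [1..int (k 0)] = col"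
    unfolding col_def map_upt_eq_map_upto[of "\<lambda>i. A i 0" 1 "k 0 + 1"]
    using kappa_first_column unfolding F0_def m_def by simp
  hence seq: "map F0 [0..int (k 0)] = (A 0 0 - 1) div 2 # col"
    using upto_rec1[of 0 "int (k 0)"] F00 by simp
  note sm = monotone_block_counts[of "L.bdry" 0 m g 0 "int (k 0)", OF L.bdry_mono _ m0 ginc _ bnd, folded F0_def]
  show "(A 0 0 - 1) div 2 + sum_list col = psum mu 0"
    using sm(1) seq unfolding m_def M.ps_def by simp
  fix c assume c: "0 < c" "c < M.ps 0"
  have "nat c \<in> psums 0 ((A 0 0 - 1) div 2 # col) \<longleftrightarrow> jumps_cut c"
    using sm(2)[of c] c seq unfolding jumps_cut_def m_def by simp
  thus "nat c \<in> psums ((A 0 0 - 1) div 2) col \<longleftrightarrow> jumps_cut c" using c by simp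
qed

lemma g_fixes_d1: "g (int d + 1) = int d + 1" using W_fixes_d1[OF g_in_W] .
lemma g_reflect_D: "g (D - y) = D - g y"
proof -
  have "g (D - y) = g (- y + D)" by (rule arg_cong[where f=g]) simp
  also have "\<dots> = g (- y) + D" by (rule W_period[OF g_in_W])
  finally show ?thesis using g_odd by simp
qed

lemma g_below_last_block: "M.ps r < y \<Longrightarrow> y \<le> int d \<Longrightarrow> g y < int d + 1"
  using g_strict_mono_on_block[of "int r + 1" y "int d + 1"] M.bdry_small[of r] M.bdry_r_plus_1
    M.ps_le[of r] D_eq g_fixes_d1 by simp

lemma g_above_last_block: "int d + 1 \<le> y \<Longrightarrow> y \<le> D - 1 - M.ps r \<Longrightarrow> int d + 1 \<le> g y"
  using g_mono_on_block[of "int r + 1" "int d + 1" y] M.bdry_small[of r] M.bdry_r_plus_1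
    M.ps_le[of r] D_eq g_fixes_d1 by simp

lemma kappa_last_column:
  assumes i: "i \<le> int r"
  shows "A i (int r + 1) = card {y. M.ps r < y \<and> y \<le> int d \<and> L.bdry (i - 1) < g y \<and> g y \<le> L.bdry i}"
proof -
  have "L.bdry i \<le> L.ps r" using L.bdry_mono[OF i] L.bdry_small[of r] by simp
  hence "y \<le> int d" if "y \<le> D - 1 - M.ps r" "g y \<le> L.bdry i" for y
    using g_above_last_block[of y] that L.ps_le[of r] by fastforce
  hence "{y. M.bdry (int r + 1 - 1) < y \<and> y \<le> M.bdry (int r + 1) \<and> L.bdry (i - 1) < g y \<and> g y \<le> L.bdry i}
      = {y. M.ps r < y \<and> y \<le> int d \<and> L.bdry (i - 1) < g y \<and> g y \<le> L.bdry i}"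
    using M.bdry_small[of r] M.bdry_r_plus_1 M.ps_le[of r] D_eq by auto
  thus ?thesis unfolding kappa_eq_card by simp
qed

text \<open>As for the first column, the corner block is symmetric, now under \<open>y \<mapsto> D - y\<close>
  around the fixed point \<open>d + 1\<close>.\<close>

lemma kappa_last_corner:
  "A (int r + 1) (int r + 1) = 1 + 2 * card {y. M.ps r < y \<and> y \<le> int d \<and> L.ps r < g y}"
proof -
  define m where "m = M.ps r"
  define a where "a = L.ps r"
  have m0: "0 \<le> m" "m \<le> int d" "0 \<le> a" "a \<le> int d"
    unfolding m_def a_def using M.ps_ge M.ps_le L.ps_ge L.ps_le by auto
  have ME: "M.bdry (int r + 1 - 1) = m" "M.bdry (int r + 1) = D - 1 - m"
    unfolding m_def using M.bdry_small[of r] M.bdry_r_plus_1 by simp_all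
  have LE: "L.bdry (int r + 1 - 1) = a" "L.bdry (int r + 1) = D - 1 - a"
    unfolding a_def using L.bdry_small[of r] L.bdry_r_plus_1 by simp_all
  define T where "T = {y. m < y \<and> y \<le> int d \<and> L.bdry (int r + 1 - 1) < g y \<and> g y \<le> L.bdry (int r + 1)}"
  have fin: "finite T" unfolding T_def by (rule finite_subset[of _ "{m<..int d}"]) auto
  have T_eq: "T = {y. m < y \<and> y \<le> int d \<and> a < g y}"
    unfolding T_def using g_below_last_block LE m0 D_eq unfolding m_def by force
  have "y \<in> {y. M.bdry (int r + 1 - 1) < y \<and> y \<le> M.bdry (int r + 1) \<and> L.bdry (int r + 1 - 1) < g y \<and> g y \<le> L.bdry (int r + 1)}
      \<longleftrightarrow> y = int d + 1 \<or> y \<in> T \<or> D - y \<in> T" for y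
    unfolding T_def using ME LE g_reflect_D[of y] g_fixes_d1 m0 D_eq by auto
  moreover have "y \<in> insert (int d + 1) (T \<union> (\<lambda>y. 2 * (int d + 1) - y) ` T) \<longleftrightarrow> y = int d + 1 \<or> y \<in> T \<or> D - y \<in> T" for y
  proof -
    have "y \<in> (\<lambda>y. 2 * (int d + 1) - y) ` T \<longleftrightarrow> D - y \<in> T"
    proof
      assume "y \<in> (\<lambda>y. 2 * (int d + 1) - y) ` T"
      then obtain z where "z \<in> T" "y = 2 * (int d + 1) - z" by blast
      thus "D - y \<in> T" using D_eq by simp
    next
      assume "D - y \<in> T" thus "y \<in> (\<lambda>y. 2 * (int d + 1) - y) ` T" using D_eq by (intro rev_image_eqI[of "D - y"]) auto
    qed
    thus ?thesis by blast
  qed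
  ultimately have "{y. M.bdry (int r + 1 - 1) < y \<and> y \<le> M.bdry (int r + 1) \<and> L.bdry (int r + 1 - 1) < g y \<and> g y \<le> L.bdry (int r + 1)}
      = insert (int d + 1) (T \<union> (\<lambda>y. 2 * (int d + 1) - y) ` T)" by blast
  moreover have "card (insert (int d + 1) (T \<union> (\<lambda>y. 2 * (int d + 1) - y) ` T)) = 1 + 2 * card T"
    using fin unfolding T_def by (intro card_insert_reflected disjI2) auto
  ultimately show ?thesis unfolding kappa_eq_card T_eq m_def a_def by simp
qed

lemma last_corner_zero_iff:
  assumes mp: "M.ps r < int d"
  shows "(A (int r + 1) (int r + 1) - 1) div 2 = 0 \<longleftrightarrow> jumps_cut (int d)"
proof -
  define T where "T = {y. M.ps r < y \<and> y \<le> int d \<and> L.ps r < g y}"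
  have fin: "finite T" unfolding T_def by (rule finite_subset[of _ "{M.ps r<..int d}"]) auto
  have half: "(A (int r + 1) (int r + 1) - 1) div 2 = card T" unfolding T_def kappa_last_corner by simp
  have Lr: "L.bdry (int r) = L.ps r" "L.bdry (int r + 1) = D - 1 - L.ps r"
    using L.bdry_small[of r] L.bdry_r_plus_1 by simp_all
  show ?thesis
  proof
    assume "(A (int r + 1) (int r + 1) - 1) div 2 = 0"
    hence "T = {}" using half fin by simp
    hence "\<not> L.ps r < g (int d)" using mp unfolding T_def by auto
    thus "jumps_cut (int d)" unfolding jumps_cut_def using g_fixes_d1 Lr L.ps_le[of r] by (intro exI[of _ "int r"]) simp
  next
    assume "jumps_cut (int d)"
    then obtain i where i: "g (int d) \<le> L.bdry i" "L.bdry i < int d + 1" unfolding jumps_cut_def using g_fixes_d1 by auto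
    have "\<not> int r + 1 \<le> i" using L.bdry_mono[of "int r + 1" i] i Lr L.ps_le[of r] D_eq by auto
    hence ai: "L.bdry i \<le> L.ps r" using L.bdry_mono[of i "int r"] Lr by simp
    have "g y \<le> g (int d)" if "M.ps r < y" "y \<le> int d" for y
      using g_mono_on_block[of "int r + 1" y "int d"] M.bdry_small[of r] M.bdry_r_plus_1 D_eq that by simp
    hence "T = {}" using i ai unfolding T_def by fastforce
    thus "(A (int r + 1) (int r + 1) - 1) div 2 = 0" using half by simp
  qed
qed

lemma column_last:
  shows "psum mu r + sum_list (map (\<lambda>i. A i (int r + 1)) [int r + 1 - int (k (r + 1)) .. int r])
      + (A (int r + 1) (int r + 1) - 1) div 2 = d"
    and "\<And>c. M.ps r < c \<Longrightarrow> c < int d \<Longrightarrow>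
      (nat c \<in> psums (psum mu r) (map (\<lambda>i. A i (int r + 1)) [int r + 1 - int (k (r + 1)) .. int r]) \<longleftrightarrow> jumps_cut c)"
proof -
  define m where "m = M.ps r"
  define lo where "lo = int r + 1 - int (k (r + 1))"
  define FR where "FR = (\<lambda>i. card {y. m < y \<and> y \<le> int d \<and> L.bdry (i - 1) < g y \<and> g y \<le> L.bdry i})"
  define col where "col = map (\<lambda>i. A i (int r + 1)) [lo .. int r]"
  define corner where "corner = (A (int r + 1) (int r + 1) - 1) div 2"
  have m0: "0 \<le> m" "m \<le> int d" unfolding m_def using M.ps_ge M.ps_le by auto
  have ME: "M.bdry (int r + 1 - 1) = m" "M.bdry (int r + 1) = D - 1 - m"
    unfolding m_def using M.bdry_small[of r] M.bdry_r_plus_1 by simp_all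
  have Lr: "L.bdry (int r + 1 - 1) = L.ps r" "L.bdry (int r + 1) = D - 1 - L.ps r"
    using L.bdry_small[of r] L.bdry_r_plus_1 by simp_all
  have ginc: "g x < g (x + 1)" if "m < x" "x < int d" for x
    using g_ascent_in_block[of "int r + 1" x] ME that D_eq m0 by simp
  have bnd: "L.bdry (lo - 1) < g y \<and> g y \<le> L.bdry (int r + 1)" if "m < y" "y \<le> int d" for y
  proof -
    have e: "int (r + 1) = int r + 1" by simp
    have yy: "M.bdry (int (r + 1) - 1) < y" "y \<le> M.bdry (int (r + 1))" unfolding e using that ME D_eq m0 by simp_all
    obtain i where i: "L.bdry (i - 1) < g y" "g y \<le> L.bdry i" "\<bar>i - int (r + 1)\<bar> \<le> int (k (r + 1))"
      using row_within_band[OF _ yy] by blast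
    have "L.bdry (lo - 1) \<le> L.bdry (i - 1)" unfolding lo_def using i(3) by (intro L.bdry_mono) simp
    thus ?thesis using i g_below_last_block[OF that[unfolded m_def]] Lr D_eq L.ps_le[of r] by simp
  qed
  have "FR (int r + 1) = card {y. M.ps r < y \<and> y \<le> int d \<and> L.ps r < g y}"
    unfolding FR_def m_def Lr using g_below_last_block D_eq L.ps_le[of r]
    by (intro arg_cong[where f=card]) fastforce
  hence corner: "FR (int r + 1) = corner" unfolding corner_def kappa_last_corner by simp
  have "map FR [lo..int r] = col" unfolding col_def FR_def m_def using kappa_last_column by simp
  hence seq: "map FR [lo..int r + 1] = col @ [corner]"
    using upto_rec2[of lo "int r + 1"] corner unfolding lo_def by simp
  have lohi: "lo \<le> int r + 1 + 1" unfolding lo_def by simp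
  note sm = monotone_block_counts[of "L.bdry" m "int d" g lo "int r + 1", OF L.bdry_mono m0 ginc lohi bnd, folded FR_def]
  have nm: "nat m = psum mu r" unfolding m_def M.ps_def by simp
  have sumeq: "psum mu r + sum_list col + corner = d" using sm(1) seq nm m0 by simp
  thus "psum mu r + sum_list col + corner = d" .
  fix c assume c: "M.ps r < c" "c < int d"
  have "nat c \<in> psums (nat m) (col @ [corner]) \<longleftrightarrow> jumps_cut c"
    using sm(2)[of c] c seq unfolding jumps_cut_def m_def by simp
  moreover have "psums (nat m) (col @ [corner]) = insert d (psums (nat m) col)"
    using psums_snoc[of "nat m" col corner] sumeq nm by simp
  moreover have "nat c \<noteq> d" using c M.ps_ge[of r] by linarith
  ultimately show "nat c \<in> psums (psum mu r) col \<longleftrightarrow> jumps_cut c" unfolding nm by simp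
qed

definition column :: "nat \<Rightarrow> nat list" where
  "column j = map (\<lambda>i. A i (int j)) [int j - int (k j) .. int j + int (k j)]"

lemma psum_mu_mono: "i \<le> j \<Longrightarrow> psum mu i \<le> psum mu j"
  using M.ps_mono[of i j] unfolding M.ps_def by simp

lemma column_sum: "1 \<le> j \<Longrightarrow> j \<le> r \<Longrightarrow> sum_list (column j) = psum mu j - psum mu (j - 1)"
  unfolding column_def using column_mid(1) by simp

lemma concat_columns:
  "m \<le> r \<Longrightarrow> sum_list (concat (map column [1..<m + 1])) = psum mu m - psum mu 0 \<and>
    psums (psum mu 0) (concat (map column [1..<m + 1])) = insert (psum mu 0) (\<Union>j \<in> {1..m}. psums (psum mu (j - 1)) (column j))"
proof (induction m)
  case 0 thus ?case by simp
next
  case (Suc m)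
  have IH: "sum_list (concat (map column [1..<m + 1])) = psum mu m - psum mu 0"
    "psums (psum mu 0) (concat (map column [1..<m + 1])) = insert (psum mu 0) (\<Union>j \<in> {1..m}. psums (psum mu (j - 1)) (column j))"
    using Suc by auto
  have up: "[1..<Suc m + 1] = [1..<m + 1] @ [m + 1]" by simp
  have mono: "psum mu 0 \<le> psum mu m" "psum mu m \<le> psum mu (m + 1)" using psum_mu_mono by auto
  have cs: "sum_list (column (m + 1)) = psum mu (m + 1) - psum mu m" using column_sum[of "m + 1"] Suc by simp
  have s: "sum_list (concat (map column [1..<Suc m + 1])) = psum mu (Suc m) - psum mu 0"
    unfolding up using IH(1) cs mono by simp
  have off: "psum mu 0 + sum_list (concat (map column [1..<m + 1])) = psum mu m" using IH(1) mono by simp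
  have "psums (psum mu 0) (concat (map column [1..<Suc m + 1]))
      = psums (psum mu 0) (concat (map column [1..<m + 1])) \<union> psums (psum mu m) (column (m + 1))"
    unfolding up using psums_app off by simp
  also have "\<dots> = insert (psum mu 0) (\<Union>j \<in> {1..Suc m}. psums (psum mu (j - 1)) (column j))"
    unfolding IH(2) by (auto simp: atLeastAtMostSuc_conv)
  finally show ?case using s by simp
qed

definition delta_head :: nat where "delta_head = (A 0 0 - 1) div 2"
definition delta_col0 :: "nat list" where "delta_col0 = map (\<lambda>i. A (int i) 0) [1..<k 0 + 1]"
definition delta_mid :: "nat list" where "delta_mid = concat (map column [1..<r + 1])"
definition delta_colR :: "nat list" where "delta_colR = map (\<lambda>i. A i (int r + 1)) [int r + 1 - int (k (r + 1)) .. int r]"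
definition delta_last :: nat where "delta_last = (A (int r + 1) (int r + 1) - 1) div 2"

lemma delta_split: "delta r A k = delta_head # (delta_col0 @ delta_mid @ delta_colR) @ [delta_last]"
  unfolding delta_def delta_head_def delta_col0_def delta_mid_def delta_colR_def delta_last_def column_def by simp

lemma delta_col0_sum: "delta_head + sum_list delta_col0 = psum mu 0"
  unfolding delta_head_def delta_col0_def using column_first(1) .

lemma cuts_delta: "cuts (delta r A k) = psums delta_head delta_col0 \<union> psums (psum mu 0) delta_mid \<union> psums (psum mu r) delta_colR"
proof -
  have sm: "sum_list delta_mid = psum mu r - psum mu 0" unfolding delta_mid_def using concat_columns[of r] by simp
  have mono: "psum mu 0 \<le> psum mu r" using psum_mu_mono by simp
  have "cuts (delta r A k) = psums delta_head (delta_col0 @ delta_mid @ delta_colR)" unfolding delta_split by (rule cuts_Cons_snoc)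
  also have "\<dots> = psums delta_head delta_col0 \<union> psums (psum mu 0) delta_mid \<union> psums (psum mu r) delta_colR"
    using psums_app[of delta_head delta_col0 "delta_mid @ delta_colR"] psums_app[of "delta_head + sum_list delta_col0" delta_mid delta_colR] delta_col0_sum sm mono by auto
  finally show ?thesis .
qed

lemma cuts_mu: "cuts mu = {psum mu j | j. j \<le> r}" by (rule M.cuts_eq)

lemma M_ps_eq_psum: "M.ps j = int (psum mu j)" unfolding M.ps_def ..

lemma delta_colR_sum: "psum mu r + sum_list delta_colR + delta_last = d"
  unfolding delta_colR_def delta_last_def using column_last(1) .

lemma psums_delta_mid:
  "psums (psum mu 0) delta_mid = insert (psum mu 0) (\<Union>j \<in> {1..r}. psums (psum mu (j - 1)) (column j))"
  unfolding delta_mid_def using concat_columns[of r] by simp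

lemma psums_column_range:
  "x \<in> psums (psum mu (j - 1)) (column j) \<Longrightarrow> 1 \<le> j \<Longrightarrow> j \<le> r \<Longrightarrow> psum mu (j - 1) \<le> x \<and> x \<le> psum mu j"
  using psums_range[of x "psum mu (j - 1)" "column j"] column_sum[of j] psum_mu_mono[of "j - 1" j] by simp

lemma psums_delta_mid_range:
  assumes "x \<in> psums (psum mu 0) delta_mid"
  shows "psum mu 0 \<le> x \<and> x \<le> psum mu r"
proof -
  consider "x = psum mu 0" | j where "1 \<le> j" "j \<le> r" "x \<in> psums (psum mu (j - 1)) (column j)"
    using assms unfolding psums_delta_mid by auto
  thus ?thesis
  proof cases
    case 1 thus ?thesis using psum_mu_mono by simp
  next
    case 2 thus ?thesis using psums_column_range[OF 2(3,1,2)] psum_mu_mono[of 0 "j - 1"] psum_mu_mono[of j r] by simp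
  qed
qed

lemma cuts_mu_subset_cuts_delta: "cuts mu \<subseteq> cuts (delta r A k)"
proof
  fix c assume "c \<in> cuts mu"
  then obtain j where j: "j \<le> r" "c = psum mu j" unfolding cuts_mu by auto
  show "c \<in> cuts (delta r A k)"
  proof (cases "j = 0")
    case True
    thus ?thesis using psums_last[of delta_head delta_col0] delta_col0_sum j unfolding cuts_delta by simp
  next
    case False
    have "psum mu (j - 1) + sum_list (column j) = psum mu j"
      using column_sum[of j] psum_mu_mono[of "j - 1" j] False j by simp
    hence "c \<in> psums (psum mu (j - 1)) (column j)" using psums_last[of "psum mu (j - 1)" "column j"] j by simp
    thus ?thesis unfolding cuts_delta psums_delta_mid using False j by auto
  qed
qed

lemma cut_delta_first_iff:
  assumes c: "c < psum mu 0"
  shows "c \<in> cuts (delta r A k) \<longleftrightarrow> jumps_cut (int c)"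
proof -
  have "c \<notin> psums (psum mu 0) delta_mid" "c \<notin> psums (psum mu r) delta_colR"
    using psums_delta_mid_range psums_range[of c "psum mu r" delta_colR] psum_mu_mono[of 0 r] c by fastforce+
  hence cuts: "c \<in> cuts (delta r A k) \<longleftrightarrow> c \<in> psums delta_head delta_col0" unfolding cuts_delta by simp
  show ?thesis
  proof (cases "c = 0")
    case True
    have "c \<in> psums delta_head delta_col0 \<longleftrightarrow> delta_head = 0"
      using psums_range[of c delta_head delta_col0] psums_first[of delta_head delta_col0] True by auto
    thus ?thesis using cuts first_corner_zero_iff True c M_ps_eq_psum unfolding delta_head_def by simp
  next
    case False
    thus ?thesis using cuts column_first(2)[of "int c"] c M_ps_eq_psum unfolding delta_head_def delta_col0_def by simp
  qed
qed

lemma cut_delta_last_iff: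
  assumes c: "psum mu r < c" "c \<le> d"
  shows "c \<in> cuts (delta r A k) \<longleftrightarrow> jumps_cut (int c)"
proof -
  have "c \<notin> psums (psum mu 0) delta_mid" "c \<notin> psums delta_head delta_col0"
    using psums_delta_mid_range psums_range[of c delta_head delta_col0] delta_col0_sum psum_mu_mono[of 0 r] c
    by fastforce+
  hence cuts: "c \<in> cuts (delta r A k) \<longleftrightarrow> c \<in> psums (psum mu r) delta_colR" unfolding cuts_delta by simp
  show ?thesis
  proof (cases "c = d")
    case True
    have "c \<in> psums (psum mu r) delta_colR \<longleftrightarrow> delta_last = 0"
      using psums_range[of c "psum mu r" delta_colR] psums_last[of "psum mu r" delta_colR] delta_colR_sum True
      by fastforce
    thus ?thesis using cuts last_corner_zero_iff True c M_ps_eq_psum unfolding delta_last_def by simp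
  next
    case False
    thus ?thesis using cuts column_last(2)[of "int c"] c M_ps_eq_psum unfolding delta_colR_def by simp
  qed
qed

lemma psums_delta_mid_column_iff:
  assumes j: "1 \<le> j" "j \<le> r" and c: "psum mu (j - 1) < c" "c < psum mu j"
  shows "c \<in> psums (psum mu 0) delta_mid \<longleftrightarrow> c \<in> psums (psum mu (j - 1)) (column j)"
proof
  assume "c \<in> psums (psum mu 0) delta_mid"
  moreover have "c \<noteq> psum mu 0" using c psum_mu_mono[of 0 "j - 1"] by simp
  ultimately obtain j' where j': "1 \<le> j'" "j' \<le> r" "c \<in> psums (psum mu (j' - 1)) (column j')"
    unfolding psums_delta_mid by auto
  have "\<not> j' < j" using psums_column_range[OF j'(3) j'(1,2)] psum_mu_mono[of j' "j - 1"] c by fastforce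
  moreover have "\<not> j < j'" using psums_column_range[OF j'(3) j'(1,2)] psum_mu_mono[of j "j' - 1"] c by fastforce
  ultimately show "c \<in> psums (psum mu (j - 1)) (column j)" using j' by (metis linorder_neqE_nat)
next
  assume "c \<in> psums (psum mu (j - 1)) (column j)"
  thus "c \<in> psums (psum mu 0) delta_mid" unfolding psums_delta_mid using j by auto
qed

lemma cut_delta_mid_iff:
  assumes c: "psum mu 0 < c" "c < psum mu r" "c \<notin> cuts mu"
  shows "c \<in> cuts (delta r A k) \<longleftrightarrow> jumps_cut (int c)"
proof -
  define j where "j = (LEAST j. c < psum mu j)"
  have ex: "c < psum mu j" unfolding j_def using LeastI[of "\<lambda>j. c < psum mu j" r] c by simp
  have jr: "j \<le> r" unfolding j_def using Least_le[of "\<lambda>j. c < psum mu j" r] c by simp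
  have j1: "1 \<le> j" using ex c by (cases j) auto
  have "\<not> c < psum mu (j - 1)" unfolding j_def using not_less_Least[of "j - 1" "\<lambda>j. c < psum mu j"] j1 j_def by simp
  moreover have "c \<noteq> psum mu (j - 1)" using c(3) jr unfolding cuts_mu by auto
  ultimately have jl: "psum mu (j - 1) < c" by simp
  have "c \<notin> psums delta_head delta_col0" "c \<notin> psums (psum mu r) delta_colR"
    using psums_range[of c delta_head delta_col0] psums_range[of c "psum mu r" delta_colR] delta_col0_sum c
    by fastforce+
  hence "c \<in> cuts (delta r A k) \<longleftrightarrow> c \<in> psums (psum mu (j - 1)) (column j)"
    unfolding cuts_delta using psums_delta_mid_column_iff[OF j1 jr jl ex] by simp
  thus ?thesis using column_mid(2)[OF j1 jr, of "int c"] jl ex M_ps_eq_psum unfolding column_def by simp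
qed

lemma cut_delta_iff:
  assumes cd: "c \<le> d"
  shows "c \<in> cuts (delta r A k) \<longleftrightarrow> c \<in> cuts mu \<or> jumps_cut (int c)"
proof (cases "c \<in> cuts mu")
  case True thus ?thesis using cuts_mu_subset_cuts_delta by auto
next
  case False
  hence "c \<noteq> psum mu 0" "c \<noteq> psum mu r" unfolding cuts_mu by auto
  hence "c < psum mu 0 \<or> psum mu r < c \<or> (psum mu 0 < c \<and> c < psum mu r)" by linarith
  thus ?thesis using cut_delta_first_iff cut_delta_last_iff[OF _ cd] cut_delta_mid_iff False by blast
qed

lemma g_period: "g (x + D) = g x + D" by (rule W_period[OF g_in_W])

lemma jumps_cut_shift: "jumps_cut (x + D) = jumps_cut x"
proof -
  have a: "g (x + D) = g x + D" by (rule g_period)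
  have "g (x + D + 1) = g ((x + 1) + D)" by (rule arg_cong[where f=g]) simp
  hence b: "g (x + D + 1) = g (x + 1) + D" using g_period by simp
  have sh: "L.bdry (i + (-1) * L.nn) = L.bdry i + (-1) * D" for i by (rule L.bdry_shiftk)
  have sh2: "L.bdry (i + 1 * L.nn) = L.bdry i + 1 * D" for i by (rule L.bdry_shiftk)
  show ?thesis unfolding jumps_cut_def a b
  proof
    assume "\<exists>i. g x + D \<le> L.bdry i \<and> L.bdry i < g (x + 1) + D"
    then obtain i where "g x + D \<le> L.bdry i" "L.bdry i < g (x + 1) + D" by blast
    thus "\<exists>i. g x \<le> L.bdry i \<and> L.bdry i < g (x + 1)" using sh[of i] by (intro exI[of _ "i + (-1) * L.nn"]) simp
  next
    assume "\<exists>i. g x \<le> L.bdry i \<and> L.bdry i < g (x + 1)"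
    then obtain i where "g x \<le> L.bdry i" "L.bdry i < g (x + 1)" by blast
    thus "\<exists>i. g x + D \<le> L.bdry i \<and> L.bdry i < g (x + 1) + D" using sh2[of i] by (intro exI[of _ "i + 1 * L.nn"]) simp
  qed
qed

lemma jumps_cut_reflect: "jumps_cut (- x - 1) = jumps_cut x"
proof -
  have a: "g (- x - 1) = - g (x + 1)"
  proof -
    have "g (- x - 1) = g (- (x + 1))" by (rule arg_cong[where f=g]) simp
    also have "\<dots> = - g (x + 1)" by (rule g_odd)
    finally show ?thesis .
  qed
  have b: "g (- x - 1 + 1) = - g x" using g_odd by simp
  show ?thesis unfolding jumps_cut_def a b
  proof
    assume "\<exists>i. - g (x + 1) \<le> L.bdry i \<and> L.bdry i < - g x"
    then obtain i where "- g (x + 1) \<le> L.bdry i" "L.bdry i < - g x" by blast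
    thus "\<exists>i. g x \<le> L.bdry i \<and> L.bdry i < g (x + 1)" using L.bdry_neg[of i] by (intro exI[of _ "- i - 1"]) simp
  next
    assume "\<exists>i. g x \<le> L.bdry i \<and> L.bdry i < g (x + 1)"
    then obtain i where "g x \<le> L.bdry i" "L.bdry i < g (x + 1)" by blast
    thus "\<exists>i. - g (x + 1) \<le> L.bdry i \<and> L.bdry i < - g x" using L.bdry_neg[of i] by (intro exI[of _ "- i - 1"]) simp
  qed
qed

lemma is_cut_delta_iff: "is_cut (cuts (delta r A k)) x \<longleftrightarrow> is_cut (cuts mu) x \<or> jumps_cut x"
proof -
  define c where "c = nat (gap_index x)"
  have c: "int c = gap_index x" "c \<le> d" unfolding c_def using gap_index_range[of x] by auto
  have "jumps_cut x = jumps_cut (gap_index x)" using gap_index_invariant[where P=jumps_cut] jumps_cut_shift jumps_cut_reflect by blast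
  thus ?thesis unfolding is_cut_def c_def[symmetric] using cut_delta_iff[OF c(2)] c(1) by simp
qed

lemma same_block_le: "u \<le> v \<Longrightarrow> same_block X u v \<longleftrightarrow> (\<forall>x. u \<le> x \<and> x < v \<longrightarrow> \<not> is_cut X x)"
  unfolding same_block_def by simp

lemma same_block_delta_imp:
  assumes uv: "u \<le> v" and H: "same_block (cuts (delta r A k)) u v"
  shows "same_block (cuts mu) u v \<and> same_block (cuts lam) (g u) (g v)"
proof -
  have H': "\<And>x. u \<le> x \<Longrightarrow> x < v \<Longrightarrow> \<not> is_cut (cuts mu) x \<and> \<not> jumps_cut x" using H same_block_le[OF uv] is_cut_delta_iff by blast
  have inc: "\<And>x. u \<le> x \<Longrightarrow> x < v \<Longrightarrow> g x < g (x + 1)" using H' g_ascent by blast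
  have guv: "g u \<le> g v" using int_step_mono_on[of u v g u v, OF inc[THEN less_imp_le]] uv by simp
  have "same_block (cuts mu) u v" using same_block_le[OF uv] H' by blast
  moreover have "same_block (cuts lam) (g u) (g v)"
    unfolding same_block_le[OF guv]
  proof (intro allI impI notI)
    fix z assume z: "g u \<le> z \<and> z < g v" and cz: "is_cut (cuts lam) z"
    obtain i where i: "z = L.bdry i" using cz L.is_cut_iff_bdry by blast
    have "u < v" using z uv by (cases "u = v") auto
    then obtain x' where x': "u < x'" "x' \<le> v" "g (x' - 1) \<le> z" "z < g x'" using int_step_crossing[of g u z v] z by blast
    have "jumps_cut (x' - 1)" unfolding jumps_cut_def using x' i by (intro exI[of _ i]) simp
    thus False using H'[of "x' - 1"] x' by simp
  qed
  ultimately show ?thesis by simp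
qed

lemma same_block_delta_if:
  assumes uv: "u \<le> v" and H: "same_block (cuts mu) u v \<and> same_block (cuts lam) (g u) (g v)"
  shows "same_block (cuts (delta r A k)) u v"
proof -
  have nm: "\<And>x. u \<le> x \<Longrightarrow> x < v \<Longrightarrow> \<not> is_cut (cuts mu) x" using H same_block_le[OF uv] by blast
  have inc: "\<And>x. u \<le> x \<Longrightarrow> x < v \<Longrightarrow> g x < g (x + 1)" using nm g_ascent by blast
  have gm: "\<And>y y'. u \<le> y \<Longrightarrow> y \<le> y' \<Longrightarrow> y' \<le> v \<Longrightarrow> g y \<le> g y'"
    using int_step_mono_on[of u v g, OF inc[THEN less_imp_le]] by blast
  have guv: "g u \<le> g v" using gm uv by simp
  have nl: "\<And>z. g u \<le> z \<Longrightarrow> z < g v \<Longrightarrow> \<not> is_cut (cuts lam) z" using H same_block_le[OF guv] by blast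
  show ?thesis
    unfolding same_block_le[OF uv]
  proof (intro allI impI)
    fix x assume x: "u \<le> x \<and> x < v"
    have "\<not> jumps_cut x"
    proof
      assume "jumps_cut x"
      then obtain i where i: "g x \<le> L.bdry i" "L.bdry i < g (x + 1)" unfolding jumps_cut_def by blast
      have "g u \<le> g x" "g (x + 1) \<le> g v" using gm x by auto
      hence "\<not> is_cut (cuts lam) (L.bdry i)" using nl i by simp
      thus False using L.is_cut_iff_bdry by blast
    qed
    thus "\<not> is_cut (cuts (delta r A k)) x" using is_cut_delta_iff nm x by blast
  qed
qed

lemma same_block_delta_iff_le:
  assumes "u \<le> v"
  shows "same_block (cuts (delta r A k)) u v \<longleftrightarrow> same_block (cuts mu) u v \<and> same_block (cuts lam) (g u) (g v)"
  using same_block_delta_imp[OF assms] same_block_delta_if[OF assms] by blast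

lemma same_block_delta_iff:
  "same_block (cuts (delta r A k)) u v \<longleftrightarrow> same_block (cuts mu) u v \<and> same_block (cuts lam) (g u) (g v)"
proof (cases "u \<le> v")
  case True thus ?thesis by (rule same_block_delta_iff_le)
next
  case False
  hence "v \<le> u" by simp
  from same_block_delta_iff_le[OF this] show ?thesis using same_block_sym by blast
qed

lemma Wpar_delta_eq: "Wpar d (delta r A k) = {inv g \<circ> w \<circ> g | w. w \<in> Wpar d lam} \<inter> Wpar d mu"
proof -
  have b: "bij g" using W_bij[OF g_in_W] .
  have gi: "g (inv g z) = z" for z using b by (simp add: bij_is_surj surj_f_inv_f)
  have ig: "inv g (g z) = z" for z using b by (simp add: bij_is_inj inv_f_f)
  show ?thesis
    unfolding Wpar_eq_block_stab
  proof (rule set_eqI, rule iffI)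
    fix x assume x: "x \<in> block_stab (cuts (delta r A k))"
    hence xW: "x \<in> W" and sx: "\<And>y. same_block (cuts (delta r A k)) (x y) y" unfolding block_stab_def by auto
    define w where "w = g \<circ> x \<circ> inv g"
    have wW: "w \<in> W" unfolding w_def using W_comp W_inv g_in_W xW by metis
    have "same_block (cuts lam) (w z) z" for z
    proof -
      have "same_block (cuts lam) (g (x (inv g z))) (g (inv g z))" using sx[of "inv g z"] same_block_delta_iff by blast
      thus ?thesis unfolding w_def using gi by simp
    qed
    hence "w \<in> block_stab (cuts lam)" using wW unfolding block_stab_def by auto
    moreover have "inv g \<circ> w \<circ> g = x" unfolding w_def using ig by (simp add: fun_eq_iff)
    moreover have "x \<in> block_stab (cuts mu)" using xW sx same_block_delta_iff unfolding block_stab_def by blast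
    ultimately show "x \<in> {inv g \<circ> w \<circ> g | w. w \<in> block_stab (cuts lam)} \<inter> block_stab (cuts mu)" by blast
  next
    fix x assume "x \<in> {inv g \<circ> w \<circ> g | w. w \<in> block_stab (cuts lam)} \<inter> block_stab (cuts mu)"
    then obtain w where w: "w \<in> block_stab (cuts lam)" "x = inv g \<circ> w \<circ> g" and xm: "x \<in> block_stab (cuts mu)" by blast
    have xW: "x \<in> W" using xm unfolding block_stab_def by simp
    have "same_block (cuts (delta r A k)) (x y) y" for y
    proof -
      have "same_block (cuts mu) (x y) y" using xm unfolding block_stab_def by simp
      moreover have "g (x y) = w (g y)" using w(2) gi by simp
      hence "same_block (cuts lam) (g (x y)) (g y)" using w(1) unfolding block_stab_def by simp
      ultimately show ?thesis using same_block_delta_iff by blast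
    qed
    thus "x \<in> block_stab (cuts (delta r A k))" using xW unfolding block_stab_def by simp
  qed
qed

end

theorem proposition2p5p3:
  fixes r d :: nat and lam mu :: "nat list" and g :: "int \<Rightarrow> int" and k :: "nat \<Rightarrow> nat"
  assumes "d \<ge> 2"
    and "lam \<in> Lam r d" and "mu \<in> Lam r d"
    and "g \<in> Dlm d lam mu"
    and "kvalid r (kappa d lam g mu) k"
  shows "Wpar d (delta r (kappa d lam g mu) k)
           = {inv g \<circ> w \<circ> g | w. w \<in> Wpar d lam} \<inter> Wpar d mu"
proof -
  interpret kappa_setting d r lam mu g k
    by unfold_locales (use assms in auto)
  show ?thesis by (rule Wpar_delta_eq)
qed

end
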